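(* Let $\mathcal H$ be a complex Hilbert space, $T\in\mathcal B(\mathcal H)$ left-invertible with Cauchy dual $T'=T(T^*T)^{-1}$, and $C_k=T'^{*k}T'^k$ for $k\in\mathbb Z_+$. Let $\mathcal H'_u=\bigcap_{n\ge0}\mathcal R(T'^n)$ and $P=P_{\mathcal H'_u}$. Then the sequences $\{T'^{k+1}C_k^{-1}T'^{*(k+1)}\}_{k\ge0}$ and $\{T'^kC_k^{-1}C_{k+1}C_k^{-1}T'^{*k}\}_{k\ge0}$ converge in the strong operator topology to positive operators $A$ and $B$ respectively, with $A=PT'PT'^*P$ and $B=P(T^*T)^{-1}P$, and the following are equivalent: (i) $T'|_{\mathcal H'_u}$ is hyponormal; (ii) $A\le B$; (iii) for all $h\in\mathcal H$, $\lim_{k\to\infty}\|(C_k^{1/2}T'C_k^{-1/2})^*C_k^{-1/2}T'^{*k}h\|^2\le\lim_{k\to\infty}\|C_k^{1/2}T'C_k^{-1/2}C_k^{-1/2}T'^{*k}h\|^2$; (iv) $P\big((T^*T)^{-1}-T'PT'^*\big)P\ge0$.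
   Context: $C_k$ is invertible for each $k$ (since $T'^k$ is left-invertible); $P_{\mathcal M}$ is the orthogonal projection onto $\mathcal M$; $\mathcal H'_u$ is invariant under $T'$ and $T'|_{\mathcal H'_u}$ is the restriction. $A$ hyponormal means $A^*A-AA^*\ge0$. The limits in (iii) exist. *)

theory Defs
  imports "HOL-Analysis.Analysis" "HOL-Library.Complex_Order"
begin

class complex_vector = real_vector +
  fixes scaleC :: "complex \<Rightarrow> 'a \<Rightarrow> 'a"
  assumes scaleC_add_right: "scaleC a (x + y) = scaleC a x + scaleC a y"
    and scaleC_add_left: "scaleC (a + b) x = scaleC a x + scaleC b x"
    and scaleC_scaleC: "scaleC a (scaleC b x) = scaleC (a * b) x"
    and scaleC_one: "scaleC 1 x = x"
    and scaleR_scaleC: "scaleR r x = scaleC (complex_of_real r) x"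

text \<open>A complex Hilbert space, presented as a (complete) real inner product space
  whose real inner product is the real part of the complex one; the multiplication
  by the imaginary unit is orthogonal.  The complex inner product is recovered
  by polarisation as \<open>cinner\<close> below.\<close>
class chilbert_space = complex_vector + real_inner + complete_space +
  assumes inner_scaleC_ii: "inner (scaleC \<i> x) (scaleC \<i> y) = inner x y"

definition cinner :: "'a::chilbert_space \<Rightarrow> 'a \<Rightarrow> complex" where
  "cinner x y = Complex (inner x y) (inner x (scaleC \<i> y))"

definition bounded_clinear :: "('a::chilbert_space \<Rightarrow> 'a) \<Rightarrow> bool" where
  "bounded_clinear T \<longleftrightarrow> bounded_linear T \<and> (\<forall>c x. T (scaleC c x) = scaleC c (T x))"

definition cadjoint :: "('a::chilbert_space \<Rightarrow> 'a) \<Rightarrow> 'a \<Rightarrow> 'a" where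
  "cadjoint T = (THE S. \<forall>x y. cinner (T x) y = cinner x (S y))"

definition left_invertible :: "('a::chilbert_space \<Rightarrow> 'a) \<Rightarrow> bool" where
  "left_invertible T \<longleftrightarrow> (\<exists>S. bounded_clinear S \<and> S \<circ> T = id)"

definition positive_op :: "('a::chilbert_space \<Rightarrow> 'a) \<Rightarrow> bool" where
  "positive_op A \<longleftrightarrow> (\<forall>x. 0 \<le> cinner (A x) x)"

definition op_le :: "('a::chilbert_space \<Rightarrow> 'a) \<Rightarrow> ('a \<Rightarrow> 'a) \<Rightarrow> bool" where
  "op_le A B \<longleftrightarrow> positive_op (\<lambda>x. B x - A x)"

definition op_sqrt :: "('a::chilbert_space \<Rightarrow> 'a) \<Rightarrow> 'a \<Rightarrow> 'a" where
  "op_sqrt A = (THE S. bounded_clinear S \<and> positive_op S \<and> S \<circ> S = A)"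

definition orth_proj :: "'a::chilbert_space set \<Rightarrow> 'a \<Rightarrow> 'a" where
  "orth_proj M x = (THE p. p \<in> M \<and> (\<forall>m\<in>M. cinner (x - p) m = 0))"

definition cauchy_dual :: "('a::chilbert_space \<Rightarrow> 'a) \<Rightarrow> 'a \<Rightarrow> 'a" where
  "cauchy_dual T = T \<circ> inv (cadjoint T \<circ> T)"

text \<open>Adjoint of an operator \<open>R\<close> acting on the subspace \<open>M\<close> (as a Hilbert space
  in its own right); values off \<open>M\<close> are normalised to \<open>0\<close>.\<close>
definition adjoint_on :: "'a::chilbert_space set \<Rightarrow> ('a \<Rightarrow> 'a) \<Rightarrow> 'a \<Rightarrow> 'a" where
  "adjoint_on M R = (THE S. (\<forall>x\<in>M. S x \<in> M) \<and> (\<forall>x. x \<notin> M \<longrightarrow> S x = 0) \<and>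
                        (\<forall>x\<in>M. \<forall>y\<in>M. cinner (R x) y = cinner x (S y)))"

definition hyponormal_on :: "'a::chilbert_space set \<Rightarrow> ('a \<Rightarrow> 'a) \<Rightarrow> bool" where
  "hyponormal_on M R \<longleftrightarrow>
     (\<forall>x\<in>M. 0 \<le> cinner (adjoint_on M R (R x) - R (adjoint_on M R x)) x)"

end

theory Submission
  imports Defs "HOL-Computational_Algebra.Formal_Power_Series"
begin

(* Since T' is bounded below, every power T'^k has closed range, and
   Q_k = T'^k C_k^-1 T'*^k is the orthogonal projection onto it.  These ranges decrease,
   so Q_k converges strongly to the projection P onto their intersection H'_u.
   Now T'^(k+1) C_k^-1 T'*^(k+1) = T' Q_k T'* and, because T'* T' = (T* T)^-1,
   T'^k C_k^-1 C_(k+1) C_k^-1 T'*^k = Q_k (T* T)^-1 Q_k; so the two sequences converge to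
   T' P T'* and P (T* T)^-1 P.  As T' maps H'_u into itself, P T' P = T' P and
   P T'* P = P T'*, whence A = T' P T'*, and the adjoint of T' restricted to H'_u is P T'*.
   Thus <A h, h> = |P T'* P h|^2 and <B h, h> = |T' P h|^2, and each of (i)-(iv) says
   |P T'* x| <= |T' x| for x in H'_u.  The square roots C_k^(1/2) in (iii) exist and are unique
   because C_k is bounded below; they are built from the binomial series of sqrt(1 - X). *)

section \<open>Complex Hilbert space arithmetic\<close>

instance chilbert_space \<subseteq> banach ..

lemma scaleC_zero_right [simp]: "scaleC c (0::'a::chilbert_space) = 0"
  by (metis add_cancel_right_right scaleC_add_right)

lemma scaleC_minus_right: "scaleC c (- x) = - scaleC c (x::'a::chilbert_space)"
  by (metis add.right_inverse eq_neg_iff_add_eq_0 scaleC_add_right scaleC_zero_right)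

lemma scaleC_diff_right: "scaleC c (x - y) = scaleC c x - scaleC c (y::'a::chilbert_space)"
  by (metis diff_conv_add_uminus scaleC_add_right scaleC_minus_right)

lemma scaleC_ii_ii: "scaleC \<i> (scaleC \<i> x) = - (x::'a::chilbert_space)"
  using scaleR_scaleC[of "-1" x] by (simp add: scaleC_scaleC)

lemma scaleC_Re_Im: "scaleC c x = Re c *\<^sub>R x + Im c *\<^sub>R scaleC \<i> (x::'a::chilbert_space)"
proof -
  have "c = complex_of_real (Re c) + complex_of_real (Im c) * \<i>"
    by (simp add: complex_eq_iff)
  then have "scaleC c x = scaleC (complex_of_real (Re c)) x + scaleC (complex_of_real (Im c) * \<i>) x"
    by (metis scaleC_add_left)
  then show ?thesis
    by (simp add: scaleR_scaleC flip: scaleC_scaleC)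
qed

lemma scaleC_scaleR_commute: "scaleC c (r *\<^sub>R x) = r *\<^sub>R scaleC c (x::'a::chilbert_space)"
  by (simp add: scaleR_scaleC scaleC_scaleC mult.commute)

lemma inner_scaleC_ii_left: "inner (scaleC \<i> x) y = - inner x (scaleC \<i> (y::'a::chilbert_space))"
  by (metis inner_scaleC_ii inner_minus_left scaleC_ii_ii)

lemma inner_scaleC_ii_self [simp]: "inner x (scaleC \<i> (x::'a::chilbert_space)) = 0"
  using inner_scaleC_ii_left[of x x] by (simp add: inner_commute)

lemma norm_scaleC_ii [simp]: "norm (scaleC \<i> (x::'a::chilbert_space)) = norm x"
  by (simp add: norm_eq_sqrt_inner inner_scaleC_ii)

lemma bounded_linear_scaleC: "bounded_linear (\<lambda>x::'a::chilbert_space. scaleC c x)"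
proof -
  have "bounded_linear (\<lambda>x::'a. scaleC \<i> x)"
    by (rule bounded_linear_intro[where K=1]) (auto simp: scaleC_add_right scaleC_scaleR_commute)
  then have "bounded_linear (\<lambda>x::'a. Re c *\<^sub>R x + Im c *\<^sub>R scaleC \<i> x)"
    by (intro bounded_linear_add bounded_linear_scaleR_right
        bounded_linear_compose[OF bounded_linear_scaleR_right])
  then show ?thesis
    by (simp flip: scaleC_Re_Im)
qed

lemma Re_cinner [simp]: "Re (cinner x y) = inner x y"
  by (simp add: cinner_def)

lemma Im_cinner [simp]: "Im (cinner x y) = inner x (scaleC \<i> y)"
  by (simp add: cinner_def)

lemma cinner_self: "cinner x x = complex_of_real ((norm x)\<^sup>2)"
  by (simp add: complex_eq_iff power2_norm_eq_inner)

lemma cnj_cinner: "cnj (cinner x y) = cinner y (x::'a::chilbert_space)"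
  by (simp add: complex_eq_iff inner_commute[of x y]) (metis inner_commute inner_scaleC_ii_left)

lemma cinner_add_left: "cinner (x + y) z = cinner x z + cinner y (z::'a::chilbert_space)"
  by (simp add: complex_eq_iff inner_add_left)

lemma cinner_add_right: "cinner z (x + y) = cinner z x + cinner z (y::'a::chilbert_space)"
  by (simp add: complex_eq_iff inner_add_right scaleC_add_right)

lemma cinner_diff_left: "cinner (x - y) z = cinner x z - cinner y (z::'a::chilbert_space)"
  by (simp add: complex_eq_iff inner_diff_left)

lemma cinner_diff_right: "cinner z (x - y) = cinner z x - cinner z (y::'a::chilbert_space)"
  by (simp add: complex_eq_iff inner_diff_right scaleC_diff_right)

lemma cinner_scaleC_left: "cinner (scaleC c x) y = c * cinner x (y::'a::chilbert_space)"
  by (subst scaleC_Re_Im)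
    (simp add: complex_eq_iff inner_add_left inner_scaleC_ii_left scaleC_ii_ii algebra_simps)

lemma cinner_scaleC_right: "cinner x (scaleC c y) = cnj c * cinner x (y::'a::chilbert_space)"
  by (metis cnj_cinner cinner_scaleC_left complex_cnj_mult)

lemma cinner_zero_left [simp]: "cinner 0 (x::'a::chilbert_space) = 0"
  by (simp add: complex_eq_iff)

lemma cinner_zero_right [simp]: "cinner x (0::'a::chilbert_space) = 0"
  by (simp add: complex_eq_iff)

lemma cinner_eq_zero_iff [simp]: "cinner x x = 0 \<longleftrightarrow> x = (0::'a::chilbert_space)"
  by (simp add: cinner_self)

lemma cinner_ext_left: "(\<And>x. cinner x y = cinner x (y'::'a::chilbert_space)) \<Longrightarrow> y = y'"
  by (metis cinner_diff_right cinner_eq_zero_iff eq_iff_diff_eq_0)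

lemma complex_of_real_nonneg_iff: "0 \<le> complex_of_real r \<longleftrightarrow> 0 \<le> r"
  by (simp add: less_eq_complex_def)

lemma tendsto_cinner_left:
  assumes "(f \<longlongrightarrow> l) F"
  shows "((\<lambda>x. cinner (f x) m) \<longlongrightarrow> cinner l (m::'a::chilbert_space)) F"
  unfolding cinner_def by (intro tendsto_intros assms)

section \<open>The projection theorem\<close>

lemma minimizing_sequence_Cauchy:
  fixes p :: "nat \<Rightarrow> 'a::real_inner"
  assumes "convex S" and pS: "\<And>n. p n \<in> S" and d_le: "\<And>y. y \<in> S \<Longrightarrow> d \<le> norm (x - y)"
    and lim: "(\<lambda>n. norm (x - p n)) \<longlonglongrightarrow> d"
  shows "Cauchy p"
proof (rule metric_CauchyI)
  fix \<epsilon> :: real assume "0 < \<epsilon>"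
  have d: "0 \<le> d" using lim by (rule tendsto_lowerbound) auto
  define r where "r n = (norm (x - p n))\<^sup>2 - d\<^sup>2" for n
  have "r \<longlonglongrightarrow> d\<^sup>2 - d\<^sup>2" unfolding r_def by (intro tendsto_intros lim)
  moreover have "0 < \<epsilon>\<^sup>2 / 4" using \<open>0 < \<epsilon>\<close> by simp
  ultimately obtain N where N: "\<And>n. n \<ge> N \<Longrightarrow> \<bar>r n\<bar> < \<epsilon>\<^sup>2 / 4"
    by (metis LIMSEQ_D diff_self diff_zero real_norm_def)
  \<comment> \<open>parallelogram law, using that the midpoint of \<open>p m\<close> and \<open>p n\<close> lies in \<open>S\<close>\<close>
  have sq: "(norm (p m - p n))\<^sup>2 \<le> 2 * r m + 2 * r n" for m n
  proof -
    have "(1/2) *\<^sub>R p m + (1/2) *\<^sub>R p n \<in> S"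
      using \<open>convex S\<close> pS by (simp add: convex_def)
    then have "2 * d \<le> 2 * norm (x - ((1/2) *\<^sub>R p m + (1/2) *\<^sub>R p n))" using d_le by simp
    also have "\<dots> = norm (2 *\<^sub>R (x - ((1/2) *\<^sub>R p m + (1/2) *\<^sub>R p n)))" by simp
    also have "2 *\<^sub>R (x - ((1/2) *\<^sub>R p m + (1/2) *\<^sub>R p n)) = (x - p m) + (x - p n)"
      by (simp add: algebra_simps scaleR_2)
    finally have "(2 * d)\<^sup>2 \<le> (norm ((x - p m) + (x - p n)))\<^sup>2" using d by (intro power_mono) auto
    moreover have "(norm ((x - p m) - (x - p n)))\<^sup>2 + (norm ((x - p m) + (x - p n)))\<^sup>2
        = 2 * (norm (x - p m))\<^sup>2 + 2 * (norm (x - p n))\<^sup>2"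
      by (simp add: power2_norm_eq_inner inner_add_left inner_add_right inner_diff_left
          inner_diff_right inner_commute)
    moreover have "norm ((x - p m) - (x - p n)) = norm (p m - p n)"
      by (simp add: norm_minus_commute)
    ultimately show ?thesis by (simp add: r_def power_mult_distrib)
  qed
  have "(norm (p m - p n))\<^sup>2 < \<epsilon>\<^sup>2" if "m \<ge> N" "n \<ge> N" for m n
    using sq[of m n] N[OF that(1)] N[OF that(2)] by (simp add: abs_less_iff)
  then show "\<exists>N. \<forall>m\<ge>N. \<forall>n\<ge>N. dist (p m) (p n) < \<epsilon>"
    using \<open>0 < \<epsilon>\<close> by (metis dist_norm less_imp_le power2_less_imp_less)
qed

lemma nearest_point_exists:
  fixes S :: "'a::{real_inner,complete_space} set"
  assumes "closed S" "convex S" "S \<noteq> {}"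
  shows "\<exists>p\<in>S. \<forall>y\<in>S. norm (x - p) \<le> norm (x - y)"
proof -
  define d where "d = infdist x S"
  have d_le: "d \<le> norm (x - y)" if "y \<in> S" for y
    using infdist_le[OF that, of x] by (simp add: d_def dist_norm)
  have "\<exists>p\<in>S. norm (x - p) < d + 1 / Suc n" for n
  proof -
    have "(INF y\<in>S. dist x y) < d + 1 / Suc n"
      using infdist_notempty[OF \<open>S \<noteq> {}\<close>] by (simp add: d_def)
    moreover have "bdd_below ((\<lambda>y. dist x y) ` S)" by (rule bdd_belowI[of _ 0]) auto
    ultimately show ?thesis using \<open>S \<noteq> {}\<close> by (auto simp: cINF_less_iff dist_norm)
  qed
  then obtain p where pS: "\<And>n. p n \<in> S" and pd: "\<And>n. norm (x - p n) < d + 1 / Suc n"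
    by metis
  have lim: "(\<lambda>n. norm (x - p n)) \<longlonglongrightarrow> d"
  proof (rule tendsto_sandwich[OF _ _ tendsto_const])
    show "\<forall>\<^sub>F n in sequentially. d \<le> norm (x - p n)" using d_le[OF pS] by simp
    show "\<forall>\<^sub>F n in sequentially. norm (x - p n) \<le> d + 1 / Suc n" using pd by (simp add: less_imp_le)
    have "(\<lambda>n. d + 1 / Suc n) \<longlonglongrightarrow> d + 0"
      by (intro tendsto_add tendsto_const LIMSEQ_Suc[OF lim_const_over_n])
    then show "(\<lambda>n. d + 1 / Suc n) \<longlonglongrightarrow> d" by simp
  qed
  obtain p0 where p0: "p \<longlonglongrightarrow> p0"
    using minimizing_sequence_Cauchy[OF \<open>convex S\<close> pS d_le lim] Cauchy_convergent_iff convergent_def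
    by blast
  have "p0 \<in> S" using \<open>closed S\<close> pS p0 closed_sequentially by blast
  moreover have "(\<lambda>n. norm (x - p n)) \<longlonglongrightarrow> norm (x - p0)" by (intro tendsto_intros p0)
  then have "norm (x - p0) = d" using lim LIMSEQ_unique by blast
  ultimately show ?thesis using d_le by blast
qed

lemma nearest_point_orthogonal:
  fixes S :: "'a::real_inner set"
  assumes "subspace S" "p \<in> S" "m \<in> S" and nearest: "\<And>y. y \<in> S \<Longrightarrow> norm (x - p) \<le> norm (x - y)"
  shows "inner (x - p) m = 0"
proof (cases "m = 0")
  case False
  define a where "a = inner (x - p) m"
  define t where "t = a / (norm m)\<^sup>2"
  have B: "0 < (norm m)\<^sup>2" using False by simp
  have "p + t *\<^sub>R m \<in> S" using assms by (simp add: subspace_add subspace_mul)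
  then have "(norm (x - p))\<^sup>2 \<le> (norm ((x - p) - t *\<^sub>R m))\<^sup>2"
    using nearest by (metis diff_diff_eq norm_ge_zero power_mono)
  also have "\<dots> = (norm (x - p))\<^sup>2 - 2 * t * a + t\<^sup>2 * (norm m)\<^sup>2"
    unfolding power2_norm_eq_inner a_def
    by (simp add: inner_diff_left inner_diff_right inner_commute power2_eq_square)
  also have "t\<^sup>2 * (norm m)\<^sup>2 = t * a" using B by (simp add: t_def power2_eq_square)
  finally have "a\<^sup>2 / (norm m)\<^sup>2 \<le> 0" by (simp add: t_def power2_eq_square)
  then show ?thesis using B by (simp add: a_def divide_le_0_iff)
qed simp

lemma orthogonal_projection_exists:
  fixes S :: "'a::{real_inner,complete_space} set"
  assumes "closed S" "subspace S"
  shows "\<exists>p\<in>S. \<forall>m\<in>S. inner (x - p) m = 0"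
  using nearest_point_exists[OF \<open>closed S\<close> subspace_imp_convex[OF \<open>subspace S\<close>]]
    nearest_point_orthogonal[OF \<open>subspace S\<close>] subspace_0[OF \<open>subspace S\<close>]
  by blast

lemma riesz_representation_real:
  fixes f :: "'a::{real_inner,complete_space} \<Rightarrow> real"
  assumes "bounded_linear f"
  shows "\<exists>z. \<forall>x. f x = inner x z"
proof (cases "\<forall>x. f x = 0")
  case True then show ?thesis by (intro exI[of _ 0]) simp
next
  case False
  then obtain x0 where x0: "f x0 \<noteq> 0" by blast
  interpret f: bounded_linear f by (rule assms)
  define K where "K = {x. f x = 0}"
  have "closed K" unfolding K_def
    by (intro closed_Collect_eq continuous_intros f.continuous_on continuous_on_id)
  moreover have "subspace K" by (auto simp: K_def subspace_def f.add f.scale)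
  ultimately obtain p where pK: "p \<in> K" and orth: "\<forall>m\<in>K. inner (x0 /\<^sub>R f x0 - p) m = 0"
    using orthogonal_projection_exists by blast
  define w where "w = x0 /\<^sub>R f x0 - p"
  have fw: "f w = 1" using pK x0 by (simp add: w_def K_def f.diff f.scale)
  have "f x = inner x (w /\<^sub>R inner w w)" for x
  proof -
    have "x - f x *\<^sub>R w \<in> K" by (simp add: K_def f.diff f.scale fw)
    then have "inner w (x - f x *\<^sub>R w) = 0" using orth by (simp add: w_def)
    then have "inner x w = f x * inner w w" by (simp add: inner_diff_right inner_commute)
    moreover have "inner w w \<noteq> 0" using fw by auto
    ultimately show ?thesis by (simp add: field_simps)
  qed
  then show ?thesis by blast
qed

section \<open>Bounded complex-linear operators and adjoints\<close>

lemma bounded_clinear_linear: "bounded_clinear T \<Longrightarrow> bounded_linear T"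
  by (simp add: bounded_clinear_def)

lemma bounded_clinear_scaleC: "bounded_clinear T \<Longrightarrow> T (scaleC c x) = scaleC c (T x)"
  by (simp add: bounded_clinear_def)

lemma bounded_clinear_add: "bounded_clinear T \<Longrightarrow> T (x + y) = T x + T y"
  by (simp add: bounded_clinear_def linear_add bounded_linear.linear)

lemma bounded_clinear_diff: "bounded_clinear T \<Longrightarrow> T (x - y) = T x - T y"
  by (simp add: bounded_clinear_def linear_diff bounded_linear.linear)

lemma bounded_clinear_zero: "bounded_clinear T \<Longrightarrow> T 0 = 0"
  by (simp add: bounded_clinear_def linear_0 bounded_linear.linear)

lemma bounded_clinear_bound: "bounded_clinear T \<Longrightarrow> \<exists>K>0. \<forall>x. norm (T x) \<le> norm x * K"
  by (simp add: bounded_clinear_def bounded_linear.pos_bounded)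

lemma bounded_clinear_tendsto:
  "bounded_clinear T \<Longrightarrow> (f \<longlongrightarrow> l) F \<Longrightarrow> ((\<lambda>x. T (f x)) \<longlongrightarrow> T l) F"
  by (simp add: bounded_clinear_def bounded_linear.tendsto)

lemma bounded_clinear_comp: "bounded_clinear A \<Longrightarrow> bounded_clinear B \<Longrightarrow> bounded_clinear (A \<circ> B)"
  unfolding bounded_clinear_def comp_def by (auto intro: bounded_linear_compose)

lemma bounded_clinear_id: "bounded_clinear id"
  by (simp add: bounded_clinear_def bounded_linear_ident id_def)

lemma bounded_clinear_funpow: "bounded_clinear T \<Longrightarrow> bounded_clinear (T ^^ n)"
  by (induction n) (simp_all add: bounded_clinear_id bounded_clinear_comp)

lemma bounded_clinearI:
  assumes "\<And>x y. T (x + y) = T x + T y" "\<And>c x. T (scaleC c x) = scaleC c (T x)"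
    and "\<And>x. norm (T x) \<le> norm x * K"
  shows "bounded_clinear T"
  unfolding bounded_clinear_def using assms
  by (auto intro!: bounded_linear_intro simp: scaleR_scaleC)

lemma cinner_adjoint_if_inner_adjoint:
  assumes "bounded_clinear T" "\<And>x y. inner (T x) y = inner x (S y)"
  shows "cinner (T x) y = cinner x (S y)"
proof -
  have "inner (T x) (scaleC \<i> y) = - inner (T (scaleC \<i> x)) y"
    using assms(1) by (simp add: inner_scaleC_ii_left bounded_clinear_scaleC)
  also have "\<dots> = inner x (scaleC \<i> (S y))"
    by (simp add: assms(2) inner_scaleC_ii_left)
  finally show ?thesis by (simp add: complex_eq_iff assms(2))
qed

lemma adjoint_exists:
  assumes "bounded_clinear T"
  shows "\<exists>S. \<forall>x y. cinner (T x) y = cinner x (S y)"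
proof -
  have "\<exists>z. \<forall>x. inner (T x) y = inner x z" for y
    using assms by (intro riesz_representation_real bounded_linear_compose[OF bounded_linear_inner_left]
        bounded_clinear_linear)
  then obtain S where "\<And>x y. inner (T x) y = inner x (S y)" by metis
  then show ?thesis using cinner_adjoint_if_inner_adjoint[OF assms] by blast
qed

lemma cadjoint_eqI:
  assumes "bounded_clinear T" "\<And>x y. cinner (T x) y = cinner x (S y)"
  shows "cadjoint T = S"
  unfolding cadjoint_def
proof (rule the_equality)
  fix S' assume S': "\<forall>x y. cinner (T x) y = cinner x (S' y)"
  show "S' = S"
  proof
    fix y show "S' y = S y" by (rule cinner_ext_left) (metis S' assms(2))
  qed
qed (use assms(2) in blast)

lemma cinner_cadjoint_right:
  assumes "bounded_clinear T"
  shows "cinner (T x) y = cinner x (cadjoint T y)"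
proof -
  obtain S where S: "\<And>x y. cinner (T x) y = cinner x (S y)" using adjoint_exists[OF assms] by blast
  then show ?thesis by (simp add: cadjoint_eqI[OF assms S])
qed

lemma cinner_cadjoint_left:
  assumes "bounded_clinear T"
  shows "cinner (cadjoint T x) y = cinner x (T y)"
  using cinner_cadjoint_right[OF assms, of y x] by (metis cnj_cinner)

lemma cinner_selfadjoint:
  "bounded_clinear G \<Longrightarrow> cadjoint G = G \<Longrightarrow> cinner (G x) y = cinner x (G y)"
  using cinner_cadjoint_right[of G x y] by simp

lemma bounded_clinear_cadjoint:
  assumes T: "bounded_clinear T"
  shows "bounded_clinear (cadjoint T)"
proof -
  obtain K where K: "K > 0" "\<And>x. norm (T x) \<le> norm x * K" using bounded_clinear_bound[OF T] by blast
  show ?thesis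
  proof (rule bounded_clinearI[where K=K])
    fix x y show "cadjoint T (x + y) = cadjoint T x + cadjoint T y"
      by (rule cinner_ext_left) (simp add: cinner_cadjoint_right[OF T, symmetric] cinner_add_right)
  next
    fix c x show "cadjoint T (scaleC c x) = scaleC c (cadjoint T x)"
      by (rule cinner_ext_left) (simp add: cinner_cadjoint_right[OF T, symmetric] cinner_scaleC_right)
  next
    fix x
    have "(norm (cadjoint T x))\<^sup>2 = inner (T (cadjoint T x)) x"
      using arg_cong[OF cinner_cadjoint_right[OF T, of "cadjoint T x" x], of Re]
      by (simp add: power2_norm_eq_inner)
    also have "\<dots> \<le> norm (cadjoint T x) * K * norm x"
      using norm_cauchy_schwarz[of "T (cadjoint T x)" x]
        mult_right_mono[OF K(2)[of "cadjoint T x"] norm_ge_zero[of x]] by linarith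
    finally show "norm (cadjoint T x) \<le> norm x * K"
      using K(1) by (cases "cadjoint T x = 0") (auto simp: power2_eq_square mult_ac)
  qed
qed

lemma cadjoint_cadjoint: "bounded_clinear T \<Longrightarrow> cadjoint (cadjoint T) = T"
  by (metis bounded_clinear_cadjoint cadjoint_eqI cinner_cadjoint_left)

lemma cadjoint_comp:
  "bounded_clinear A \<Longrightarrow> bounded_clinear B \<Longrightarrow> cadjoint (A \<circ> B) = cadjoint B \<circ> cadjoint A"
  by (intro cadjoint_eqI bounded_clinear_comp) (simp_all add: cinner_cadjoint_right)

lemma cadjoint_id: "cadjoint id = id"
  by (rule cadjoint_eqI[OF bounded_clinear_id]) simp

lemma cadjoint_funpow:
  assumes "bounded_clinear T"
  shows "cadjoint (T ^^ n) = cadjoint T ^^ n"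
proof (induction n)
  case (Suc n)
  have "cadjoint (T ^^ Suc n) = cadjoint (T ^^ n \<circ> T)" by (simp only: funpow_Suc_right)
  also have "\<dots> = cadjoint T \<circ> cadjoint T ^^ n"
    by (simp add: cadjoint_comp bounded_clinear_funpow assms Suc.IH)
  finally show ?case by (simp only: funpow.simps(2))
qed (simp only: funpow.simps(1) cadjoint_id)

lemma cinner_selfadjoint_self:
  assumes "bounded_clinear G" "cadjoint G = G"
  shows "cinner (G x) x = complex_of_real (inner (G x) x)"
proof -
  have "cnj (cinner (G x) x) = cinner (G x) x"
    using cinner_selfadjoint[OF assms, of x x] by (simp add: cnj_cinner)
  then have "Im (cinner (G x) x) = 0" by (metis cnj.sel(2) neg_equal_zero)
  then show ?thesis by (simp add: complex_eq_iff)
qed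

lemma positive_op_iff_real_form:
  "(\<And>x. cinner (A x) x = complex_of_real (f x)) \<Longrightarrow> positive_op A \<longleftrightarrow> (\<forall>x. 0 \<le> f x)"
  by (simp add: positive_op_def complex_of_real_nonneg_iff)

section \<open>Operators bounded below and orthogonal projections\<close>

definition bounded_below :: "('a::real_normed_vector \<Rightarrow> 'b::real_normed_vector) \<Rightarrow> bool" where
  "bounded_below f \<longleftrightarrow> (\<exists>b>0. \<forall>x. b * norm x \<le> norm (f x))"

lemma bounded_below_if_left_invertible: "left_invertible V \<Longrightarrow> bounded_below V"
proof -
  assume "left_invertible V"
  then obtain S where S: "bounded_clinear S" "S \<circ> V = id" by (auto simp: left_invertible_def)
  obtain K where K: "K > 0" "\<And>x. norm (S x) \<le> norm x * K" using bounded_clinear_bound[OF S(1)] by blast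
  have "(1 / K) * norm x \<le> norm (V x)" for x
    using K(2)[of "V x"] fun_cong[OF S(2), of x] K(1) by (simp add: field_simps)
  then show ?thesis unfolding bounded_below_def using K(1) by (intro exI[of _ "1/K"]) auto
qed

lemma left_invertible_comp: "left_invertible A \<Longrightarrow> left_invertible B \<Longrightarrow> left_invertible (A \<circ> B)"
proof -
  assume "left_invertible A" "left_invertible B"
  then obtain SA SB where "bounded_clinear SA" "SA \<circ> A = id" "bounded_clinear SB" "SB \<circ> B = id"
    by (auto simp: left_invertible_def)
  moreover have "(SB \<circ> SA) \<circ> (A \<circ> B) = SB \<circ> (SA \<circ> A) \<circ> B" by (simp add: comp_assoc)
  ultimately show ?thesis
    unfolding left_invertible_def by (intro exI[of _ "SB \<circ> SA"]) (simp add: bounded_clinear_comp)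
qed

lemma left_invertible_funpow:
  assumes "left_invertible A"
  shows "left_invertible (A ^^ n)"
proof (induction n)
  case 0 show ?case unfolding left_invertible_def using bounded_clinear_id by auto
next
  case (Suc n) then show ?case using left_invertible_comp[OF assms] by (simp only: funpow.simps(2))
qed

lemma bounded_below_inj:
  assumes "linear f" "bounded_below f"
  shows "inj f"
proof (rule injI)
  fix x y assume "f x = f y"
  then have "f (x - y) = 0" by (simp add: linear_diff[OF assms(1)])
  moreover obtain b where "b > 0" "b * norm (x - y) \<le> norm (f (x - y))"
    using assms(2) bounded_below_def by blast
  ultimately show "x = y" by (simp add: mult_le_0_iff)
qed

lemma closed_range_bounded_below:
  fixes f :: "'a::banach \<Rightarrow> 'b::real_normed_vector"
  assumes "bounded_linear f" "bounded_below f"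
  shows "closed (range f)"
  using assms complete_isometric_image[OF _ subspace_UNIV, of _ f] complete_UNIV
  by (auto simp: bounded_below_def mult.commute intro: complete_imp_closed)

definition closed_csubspace :: "'a::chilbert_space set \<Rightarrow> bool" where
  "closed_csubspace M \<longleftrightarrow>
     closed M \<and> 0 \<in> M \<and> (\<forall>x\<in>M. \<forall>y\<in>M. x + y \<in> M) \<and> (\<forall>c. \<forall>x\<in>M. scaleC c x \<in> M)"

lemma closed_csubspace_diff: "closed_csubspace M \<Longrightarrow> x \<in> M \<Longrightarrow> y \<in> M \<Longrightarrow> x - y \<in> M"
  unfolding closed_csubspace_def by (metis diff_conv_add_uminus scaleR_minus1_left scaleR_scaleC)

lemma closed_csubspace_range:
  assumes "bounded_clinear V" "bounded_below V"
  shows "closed_csubspace (range V)"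
  using assms closed_range_bounded_below[OF bounded_clinear_linear]
  unfolding closed_csubspace_def
  by (auto simp flip: bounded_clinear_add bounded_clinear_scaleC intro: range_eqI[of _ _ 0]
      simp: bounded_clinear_zero)

lemma closed_csubspace_INT: "(\<And>i. closed_csubspace (M i)) \<Longrightarrow> closed_csubspace (\<Inter>i. M i)"
  unfolding closed_csubspace_def by (auto intro: closed_INT)

lemma orth_proj_eqI:
  assumes "closed_csubspace M" "p \<in> M" "\<And>m. m \<in> M \<Longrightarrow> cinner (x - p) m = 0"
  shows "orth_proj M x = p"
  unfolding orth_proj_def
proof (rule the_equality)
  fix q assume q: "q \<in> M \<and> (\<forall>m\<in>M. cinner (x - q) m = 0)"
  then have "p - q \<in> M" using closed_csubspace_diff assms(1,2) by blast
  then have "cinner ((x - q) - (x - p)) (p - q) = 0"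
    using q assms(3) by (simp add: cinner_diff_left)
  then show "q = p" by simp
qed (use assms in blast)

lemma orth_proj_exists:
  assumes "closed_csubspace M"
  shows "\<exists>p\<in>M. \<forall>m\<in>M. cinner (x - p) m = 0"
proof -
  have "closed M" "subspace M"
    using assms by (auto simp: closed_csubspace_def subspace_def scaleR_scaleC)
  then obtain p where "p \<in> M" and orth: "\<And>m. m \<in> M \<Longrightarrow> inner (x - p) m = 0"
    using orthogonal_projection_exists by blast
  moreover have "scaleC \<i> m \<in> M" if "m \<in> M" for m
    using assms that by (simp add: closed_csubspace_def)
  ultimately show ?thesis by (auto simp: complex_eq_iff)
qed

lemma
  assumes "closed_csubspace M"
  shows orth_proj_in: "orth_proj M x \<in> M"
    and orth_proj_orthogonal: "m \<in> M \<Longrightarrow> cinner (x - orth_proj M x) m = 0"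
  using orth_proj_exists[OF assms, of x] orth_proj_eqI[OF assms] by auto

lemma orth_proj_id: "closed_csubspace M \<Longrightarrow> m \<in> M \<Longrightarrow> orth_proj M m = m"
  by (rule orth_proj_eqI) simp_all

lemma cinner_orth_proj_orth_proj:
  assumes "closed_csubspace M"
  shows "cinner (orth_proj M x) y = cinner (orth_proj M x) (orth_proj M y)"
proof -
  have "cinner (y - orth_proj M y) (orth_proj M x) = 0"
    by (simp add: assms orth_proj_in orth_proj_orthogonal)
  then have "cinner (orth_proj M x) (y - orth_proj M y) = 0" by (metis cnj_cinner complex_cnj_zero)
  then show ?thesis by (simp add: cinner_diff_right)
qed

lemma cinner_orth_proj:
  assumes "closed_csubspace M"
  shows "cinner (orth_proj M x) y = cinner x (orth_proj M y)"
  using cinner_orth_proj_orth_proj[OF assms, of x y] cinner_orth_proj_orth_proj[OF assms, of y x]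
  by (metis cnj_cinner)

lemma cinner_orth_proj_self:
  "closed_csubspace M \<Longrightarrow> cinner (orth_proj M x) x = complex_of_real ((norm (orth_proj M x))\<^sup>2)"
  by (metis cinner_orth_proj_orth_proj cinner_self cnj_cinner complex_cnj_complex_of_real)

lemma norm_orth_proj_le:
  assumes "closed_csubspace M"
  shows "norm (orth_proj M x) \<le> norm x"
proof -
  have "(norm (orth_proj M x))\<^sup>2 = inner (orth_proj M x) x"
    using arg_cong[OF cinner_orth_proj_self[OF assms, of x], of Re] by simp
  also have "\<dots> \<le> norm (orth_proj M x) * norm x" by (rule norm_cauchy_schwarz)
  finally show ?thesis by (cases "orth_proj M x = 0") (auto simp: power2_eq_square)
qed

lemma bounded_clinear_orth_proj:
  assumes M: "closed_csubspace M"
  shows "bounded_clinear (orth_proj M)"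
proof (rule bounded_clinearI[where K=1])
  note in_M = orth_proj_in[OF M] and orth = orth_proj_orthogonal[OF M]
  fix x y
  have eq: "(x + y) - (orth_proj M x + orth_proj M y) = (x - orth_proj M x) + (y - orth_proj M y)"
    by simp
  show "orth_proj M (x + y) = orth_proj M x + orth_proj M y"
    using M in_M orth by (intro orth_proj_eqI) (auto simp: closed_csubspace_def eq cinner_add_left)
next
  note in_M = orth_proj_in[OF M] and orth = orth_proj_orthogonal[OF M]
  fix c x
  have eq: "scaleC c x - scaleC c (orth_proj M x) = scaleC c (x - orth_proj M x)"
    by (simp add: scaleC_diff_right)
  show "orth_proj M (scaleC c x) = scaleC c (orth_proj M x)"
    using M in_M orth by (intro orth_proj_eqI) (auto simp: closed_csubspace_def eq cinner_scaleC_left)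
qed (simp add: norm_orth_proj_le M)

lemma Cauchy_if_dist_sq_le_diff:
  fixes x :: "nat \<Rightarrow> 'a::metric_space"
  assumes "Cauchy a" and le: "\<And>m n. m \<le> n \<Longrightarrow> (dist (x m) (x n))\<^sup>2 \<le> a m - a n"
  shows "Cauchy x"
proof (rule metric_CauchyI)
  fix \<epsilon> :: real assume "0 < \<epsilon>"
  then obtain N where N: "\<And>m n. m \<ge> N \<Longrightarrow> n \<ge> N \<Longrightarrow> dist (a m) (a n) < \<epsilon>\<^sup>2"
    using metric_CauchyD[OF \<open>Cauchy a\<close>, of "\<epsilon>\<^sup>2"] by auto
  have "(dist (x m) (x n))\<^sup>2 < \<epsilon>\<^sup>2" if "m \<ge> N" "n \<ge> N" for m n
  proof (cases "m \<le> n")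
    case True
    then show ?thesis using le[OF True] N[OF that] unfolding dist_real_def abs_less_iff by linarith
  next
    case False
    then have "(dist (x m) (x n))\<^sup>2 \<le> a n - a m" using le[of n m] by (simp add: dist_commute)
    then show ?thesis using N[OF that] unfolding dist_real_def abs_less_iff by linarith
  qed
  then show "\<exists>N. \<forall>m\<ge>N. \<forall>n\<ge>N. dist (x m) (x n) < \<epsilon>"
    using \<open>0 < \<epsilon>\<close> by (meson less_imp_le power2_less_imp_less)
qed

lemma orth_proj_decseq_tendsto:
  assumes M: "\<And>k. closed_csubspace (M k)" and dec: "\<And>k. M (Suc k) \<subseteq> M k"
  shows "(\<lambda>k. orth_proj (M k) h) \<longlonglongrightarrow> orth_proj (\<Inter>k. M k) h"
proof -
  define Q where "Q k = orth_proj (M k) h" for k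
  have pythagoras: "(norm (Q k))\<^sup>2 = (norm (Q j))\<^sup>2 + (norm (Q k - Q j))\<^sup>2" if "k \<le> j" for j k
  proof -
    have "Q j \<in> M k"
      using lift_Suc_antimono_le[of M, OF dec that] orth_proj_in[OF M, of j h] unfolding Q_def by blast
    then have "inner (h - Q k) (Q j) = 0" and "inner (h - Q j) (Q j) = 0"
      using orth_proj_orthogonal[OF M] orth_proj_in[OF M] unfolding Q_def
      by (metis Re_cinner zero_complex.simps(1))+
    then have "inner (Q j) (Q k - Q j) = 0"
      by (simp add: inner_diff_left inner_diff_right inner_commute)
    then show ?thesis
      by (simp add: power2_norm_eq_inner inner_diff_left inner_diff_right inner_commute)
  qed
  have "decseq (\<lambda>k. (norm (Q k))\<^sup>2)"
    unfolding decseq_def by (metis pythagoras le_add_same_cancel1 zero_le_power2)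
  then obtain a where "(\<lambda>k. (norm (Q k))\<^sup>2) \<longlonglongrightarrow> a" by (rule decseq_convergent[of _ 0]) auto
  then have "Cauchy (\<lambda>k. (norm (Q k))\<^sup>2)" by (rule LIMSEQ_imp_Cauchy)
  moreover have "(dist (Q m) (Q n))\<^sup>2 \<le> (norm (Q m))\<^sup>2 - (norm (Q n))\<^sup>2" if "m \<le> n" for m n
    using pythagoras[OF that] by (simp add: dist_norm)
  ultimately have "Cauchy Q" by (rule Cauchy_if_dist_sq_le_diff)
  then obtain L where L: "Q \<longlonglongrightarrow> L" using Cauchy_convergent_iff convergent_def by blast
  have LM: "L \<in> M k" for k
  proof (rule closed_sequentially[OF _ _ LIMSEQ_ignore_initial_segment[OF L, of k]])
    show "closed (M k)" using M[of k] by (simp add: closed_csubspace_def)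
    show "Q (j + k) \<in> M k" for j
      using lift_Suc_antimono_le[of M, OF dec] orth_proj_in[OF M] Q_def by (metis le_add2 subsetD)
  qed
  have "cinner (h - L) m = 0" if "m \<in> (\<Inter>k. M k)" for m
  proof (rule LIMSEQ_unique)
    show "(\<lambda>k. cinner (h - Q k) m) \<longlonglongrightarrow> cinner (h - L) m"
      by (intro tendsto_cinner_left tendsto_diff tendsto_const L)
    show "(\<lambda>k. cinner (h - Q k) m) \<longlonglongrightarrow> 0"
      using that orth_proj_orthogonal[OF M] by (simp add: Q_def)
  qed
  then have "orth_proj (\<Inter>k. M k) h = L"
    using LM by (intro orth_proj_eqI closed_csubspace_INT[OF M]) auto
  then show ?thesis using L by (simp add: Q_def[abs_def])
qed

lemma bij_if_selfadjoint_bounded_below: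
  assumes G: "bounded_clinear G" "cadjoint G = G" "bounded_below G"
  shows "bij G"
proof -
  have inj: "inj G" by (rule bounded_below_inj[OF bounded_linear.linear G(3)]) (rule bounded_clinear_linear[OF G(1)])
  have M: "closed_csubspace (range G)" by (rule closed_csubspace_range[OF G(1,3)])
  have "z \<in> range G" for z
  proof -
    define p where "p = orth_proj (range G) z"
    have "cinner (G (z - p)) u = 0" for u
      using orth_proj_orthogonal[OF M, of "G u" z] by (simp add: p_def cinner_selfadjoint[OF G(1,2)])
    then have "G (z - p) = G 0" using bounded_clinear_zero[OF G(1)] cinner_eq_zero_iff by metis
    then have "z = p" using inj by (simp add: inj_eq)
    then show ?thesis using orth_proj_in[OF M, of z] p_def by simp
  qed
  then show ?thesis using inj by (auto simp: bij_def)
qed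

lemma bounded_clinear_inv:
  assumes G: "bounded_clinear G" "bounded_below G" "bij G"
  shows "bounded_clinear (inv G)"
proof -
  obtain b where b: "b > 0" "\<And>x. b * norm x \<le> norm (G x)" using G(2) bounded_below_def by blast
  have GI: "G (inv G y) = y" for y using G(3) by (simp add: bij_is_surj surj_f_inv_f)
  have IG: "inv G (G x) = x" for x using G(3) by (simp add: bij_is_inj inv_f_f)
  show ?thesis
  proof (rule bounded_clinearI[where K="1/b"])
    fix x y show "inv G (x + y) = inv G x + inv G y" by (metis GI IG bounded_clinear_add[OF G(1)])
  next
    fix c x show "inv G (scaleC c x) = scaleC c (inv G x)" by (metis GI IG bounded_clinear_scaleC[OF G(1)])
  next
    fix x show "norm (inv G x) \<le> norm x * (1 / b)"
      using b(2)[of "inv G x"] b(1) by (simp add: GI field_simps)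
  qed
qed

lemma cadjoint_inv:
  assumes "bounded_clinear G" "cadjoint G = G" "bij G" "bounded_clinear (inv G)"
  shows "cadjoint (inv G) = inv G"
proof (rule cadjoint_eqI[OF assms(4)])
  have GI: "G (inv G y) = y" for y using assms(3) by (simp add: bij_is_surj surj_f_inv_f)
  fix x y
  have "cinner (inv G x) y = cinner (inv G x) (G (inv G y))" by (simp add: GI)
  also have "\<dots> = cinner (G (inv G x)) (inv G y)" by (simp add: cinner_selfadjoint[OF assms(1,2)])
  finally show "cinner (inv G x) y = cinner x (inv G y)" by (simp add: GI)
qed

lemma cinner_gram: "bounded_clinear V \<Longrightarrow> cinner ((cadjoint V \<circ> V) x) y = cinner (V x) (V y)"
  by (simp add: cinner_cadjoint_left)

lemma
  assumes "bounded_clinear V"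
  shows bounded_clinear_gram: "bounded_clinear (cadjoint V \<circ> V)"
    and selfadjoint_gram: "cadjoint (cadjoint V \<circ> V) = cadjoint V \<circ> V"
  using assms
  by (simp_all add: bounded_clinear_comp bounded_clinear_cadjoint cadjoint_comp cadjoint_cadjoint)

lemma bounded_below_gram:
  assumes V: "bounded_clinear V" "bounded_below V"
  shows "bounded_below (cadjoint V \<circ> V)"
proof -
  obtain b where b: "b > 0" "\<And>x. b * norm x \<le> norm (V x)" using V(2) bounded_below_def by blast
  have "b\<^sup>2 * norm x \<le> norm ((cadjoint V \<circ> V) x)" for x
  proof -
    have "(b * norm x)\<^sup>2 \<le> (norm (V x))\<^sup>2" using b by (intro power_mono) auto
    also have "\<dots> = inner ((cadjoint V \<circ> V) x) x"
      using arg_cong[OF cinner_gram[OF V(1), of x x], of Re] by (simp add: power2_norm_eq_inner)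
    also have "\<dots> \<le> norm ((cadjoint V \<circ> V) x) * norm x" by (rule norm_cauchy_schwarz)
    finally have "(b\<^sup>2 * norm x) * norm x \<le> norm ((cadjoint V \<circ> V) x) * norm x"
      by (simp add: power2_eq_square mult_ac)
    then show ?thesis by (cases "x = 0") (auto simp: mult_le_cancel_right)
  qed
  then show ?thesis using b(1) unfolding bounded_below_def by (intro exI[of _ "b\<^sup>2"]) auto
qed

lemma
  assumes "bounded_clinear V" "bounded_below V"
  shows bij_gram: "bij (cadjoint V \<circ> V)"
    and bounded_clinear_inv_gram: "bounded_clinear (inv (cadjoint V \<circ> V))"
    and cadjoint_inv_gram: "cadjoint (inv (cadjoint V \<circ> V)) = inv (cadjoint V \<circ> V)"
proof -
  note G = bounded_clinear_gram[OF assms(1)] selfadjoint_gram[OF assms(1)]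
    bounded_below_gram[OF assms]
  show bij: "bij (cadjoint V \<circ> V)" by (rule bij_if_selfadjoint_bounded_below[OF G])
  show inv: "bounded_clinear (inv (cadjoint V \<circ> V))" by (rule bounded_clinear_inv[OF G(1,3) bij])
  show "cadjoint (inv (cadjoint V \<circ> V)) = inv (cadjoint V \<circ> V)" by (rule cadjoint_inv[OF G(1,2) bij inv])
qed

lemma orth_proj_range:
  assumes V: "bounded_clinear V" "bounded_below V"
  shows "orth_proj (range V) = V \<circ> inv (cadjoint V \<circ> V) \<circ> cadjoint V"
proof
  fix h
  let ?G = "cadjoint V \<circ> V"
  have GI: "cadjoint V (V (inv ?G y)) = y" for y
    using bij_gram[OF V] by (metis bij_is_surj comp_apply surj_f_inv_f)
  show "orth_proj (range V) h = (V \<circ> inv ?G \<circ> cadjoint V) h"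
  proof (rule orth_proj_eqI[OF closed_csubspace_range[OF V]])
    fix m assume "m \<in> range V"
    then obtain u where u: "m = V u" by blast
    have "cinner (h - V (inv ?G (cadjoint V h))) (V u)
        = cinner (cadjoint V h - cadjoint V (V (inv ?G (cadjoint V h)))) u"
      by (simp add: cinner_cadjoint_left[OF V(1), symmetric]
          bounded_clinear_diff[OF bounded_clinear_cadjoint[OF V(1)]])
    then show "cinner (h - (V \<circ> inv ?G \<circ> cadjoint V) h) m = 0" by (simp add: GI u)
  qed simp
qed

section \<open>Square roots of strictly positive operators\<close>

definition sqrt_coeff :: "nat \<Rightarrow> real" where
  "sqrt_coeff n = ((1/2::real) gchoose n) * (-1) ^ n"

lemma sqrt_coeff_Suc: "sqrt_coeff (Suc k) = (real k - 1/2) / (real k + 1) * sqrt_coeff k"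
proof -
  have "(1/2::real) * ((1/2) gchoose k) = real k * ((1/2) gchoose k) + real (Suc k) * ((1/2) gchoose (Suc k))"
    by (rule gbinomial_mult_1)
  then have "((1/2::real) gchoose (Suc k)) = (1/2 - real k) / (real k + 1) * ((1/2) gchoose k)"
    by (simp add: field_simps)
  then have "sqrt_coeff (Suc k) = ((1/2 - real k) / (real k + 1) * ((1/2) gchoose k)) * (- ((-1)^k))"
    by (simp add: sqrt_coeff_def)
  also have "\<dots> = (real k - 1/2) / (real k + 1) * sqrt_coeff k"
    by (simp add: sqrt_coeff_def field_simps)
  finally show ?thesis .
qed

lemma abs_sqrt_coeff_le: "\<bar>sqrt_coeff n\<bar> \<le> 1"
proof (induction n)
  case (Suc k)
  have "\<bar>(real k - 1/2) / (real k + 1)\<bar> \<le> 1" by (simp add: abs_le_iff field_simps)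
  then have "\<bar>(real k - 1/2) / (real k + 1)\<bar> * \<bar>sqrt_coeff k\<bar> \<le> 1 * 1"
    using Suc by (intro mult_mono) auto
  then show ?case by (simp add: sqrt_coeff_Suc abs_mult)
qed (simp add: sqrt_coeff_def)

lemma sqrt_coeff_nonpos: "n \<ge> 1 \<Longrightarrow> sqrt_coeff n \<le> 0"
proof (induction n rule: dec_induct)
  case (step k)
  have "0 \<le> (real k - 1/2) / (real k + 1)" using step(1) by simp
  then show ?case unfolding sqrt_coeff_Suc by (rule mult_nonneg_nonpos[OF _ step(3)])
qed (simp add: sqrt_coeff_def)

lemma sqrt_coeff_convolution:
  "(\<Sum>i\<le>k. sqrt_coeff i * sqrt_coeff (k - i)) = (if k = 0 then 1 else if k = 1 then -1 else 0)"
proof -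
  have "sqrt_coeff i * sqrt_coeff (k - i) = (-1)^k * (((1/2::real) gchoose i) * ((1/2) gchoose (k - i)))"
    if "i \<le> k" for i
  proof -
    have "(-1::real)^i * (-1)^(k-i) = (-1)^k" using that by (simp flip: power_add)
    then show ?thesis by (simp add: sqrt_coeff_def algebra_simps)
  qed
  then have "(\<Sum>i\<le>k. sqrt_coeff i * sqrt_coeff (k - i))
      = (-1)^k * (\<Sum>i=0..k. ((1/2::real) gchoose i) * ((1/2) gchoose (k - i)))"
    by (simp add: sum_distrib_left atLeast0AtMost)
  also have "\<dots> = (-1)^k * ((1::real) gchoose k)"
    using gbinomial_Vandermonde[of "1/2::real" "1/2" k] by simp
  also have "(1::real) gchoose k = real (1 choose k)"
    using binomial_gbinomial[of 1 k, where 'a=real] by simp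
  finally show ?thesis by (cases k) (auto simp: binomial_eq_0)
qed

lemma sqrt_coeff_sums: "\<bar>q\<bar> < 1 \<Longrightarrow> (\<lambda>n. sqrt_coeff n * q ^ n) sums sqrt (1 - q)"
  using gen_binomial_real[of "-q" "1/2"]
  by (simp add: sqrt_coeff_def power_minus' powr_half_sqrt algebra_simps)

lemma Cauchy_product_sums_bilinear:
  fixes a :: "nat \<Rightarrow> 'a::banach" and b :: "nat \<Rightarrow> 'b::banach"
    and g :: "'a \<Rightarrow> 'b \<Rightarrow> 'c::real_normed_vector"
  assumes "bounded_bilinear g"
    and a: "summable (\<lambda>k. norm (a k))" and b: "summable (\<lambda>k. norm (b k))"
  shows "(\<lambda>k. \<Sum>i\<le>k. g (a i) (b (k - i))) sums g (suminf a) (suminf b)"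
proof -
  interpret P: bounded_bilinear g by (rule assms(1))
  obtain K where "\<And>x y. norm (g x y) \<le> norm x * norm y * K" using P.bounded by blast
  then have K: "norm (g x y) \<le> K * (norm x * norm y)" for x y by (simp add: mult.commute)
  define sq where "sq n = {..<n} \<times> {..<n}" for n :: nat
  define tri where "tri n = {(i, j). i + j < n}" for n :: nat
  have sub: "tri n \<subseteq> sq n" and fin: "finite (sq n)" for n by (auto simp: tri_def sq_def)
  have diag: "(\<Sum>k<n. \<Sum>i\<le>k. f i (k - i)) = (\<Sum>(i,j)\<in>tri n. f i j)"
    for f :: "nat \<Rightarrow> nat \<Rightarrow> 'x::comm_monoid_add" and n
    by (simp add: tri_def sum.triangle_reindex)
  have "(\<lambda>n. \<Sum>(i,j)\<in>sq n. norm (a i) * norm (b j)) \<longlonglongrightarrow> (\<Sum>k. norm (a k)) * (\<Sum>k. norm (b k))"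
    using tendsto_mult[OF summable_LIMSEQ[OF a] summable_LIMSEQ[OF b]]
    by (simp add: sq_def sum_product sum.cartesian_product)
  moreover have "(\<lambda>n. \<Sum>(i,j)\<in>tri n. norm (a i) * norm (b j)) \<longlonglongrightarrow> (\<Sum>k. norm (a k)) * (\<Sum>k. norm (b k))"
    using Cauchy_product_sums[of "\<lambda>k. norm (a k)" "\<lambda>k. norm (b k)"] a b
    by (simp add: sums_def diag[of "\<lambda>i j. norm (a i) * norm (b j)"])
  \<comment> \<open>by the real Cauchy product, the terms off the triangle become negligible\<close>
  ultimately have "(\<lambda>n. \<Sum>(i,j)\<in>sq n - tri n. norm (a i) * norm (b j)) \<longlonglongrightarrow> 0"
    using tendsto_diff by (force simp: sum.subset_diff[OF sub fin])
  then have "(\<lambda>n. K * (\<Sum>(i,j)\<in>sq n - tri n. norm (a i) * norm (b j))) \<longlonglongrightarrow> 0"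
    by (rule tendsto_mult_right_zero)
  moreover have "\<forall>n. norm (\<Sum>(i,j)\<in>sq n - tri n. g (a i) (b j))
      \<le> K * (\<Sum>(i,j)\<in>sq n - tri n. norm (a i) * norm (b j))"
    unfolding sum_distrib_left split_def by (intro allI order_trans[OF norm_sum sum_mono] K)
  ultimately have rest: "(\<lambda>n. \<Sum>(i,j)\<in>sq n - tri n. g (a i) (b j)) \<longlonglongrightarrow> 0"
    by (rule Lim_null_comparison[OF always_eventually, rotated])
  have "(\<lambda>n. g (\<Sum>i<n. a i) (\<Sum>j<n. b j)) \<longlonglongrightarrow> g (suminf a) (suminf b)"
    using summable_LIMSEQ[OF summable_norm_cancel[OF a]] summable_LIMSEQ[OF summable_norm_cancel[OF b]]
    by (rule P.tendsto)
  then have "(\<lambda>n. \<Sum>(i,j)\<in>sq n. g (a i) (b j)) \<longlonglongrightarrow> g (suminf a) (suminf b)"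
    by (simp only: P.sum_left, simp only: P.sum_right, simp add: sq_def sum.cartesian_product)
  from tendsto_diff[OF this rest]
  have "(\<lambda>n. \<Sum>(i,j)\<in>tri n. g (a i) (b j)) \<longlonglongrightarrow> g (suminf a) (suminf b)"
    by (simp add: sum.subset_diff[OF sub fin])
  then show ?thesis by (simp add: sums_def diag[of "\<lambda>i j. g (a i) (b j)"])
qed

lemma bounded_linear_funpow:
  fixes f :: "'a::real_normed_vector \<Rightarrow> 'a"
  shows "bounded_linear f \<Longrightarrow> bounded_linear (f ^^ n)"
proof (induction n)
  case 0 show ?case by (simp add: id_def bounded_linear_ident)
next
  case (Suc n) then show ?case using bounded_linear_compose[of f "f ^^ n"] by (simp add: comp_def)
qed

definition sqrt_series :: "('a::real_normed_vector \<Rightarrow> 'a) \<Rightarrow> 'a \<Rightarrow> 'a" where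
  "sqrt_series X x = (\<Sum>n. sqrt_coeff n *\<^sub>R (X ^^ n) x)"

context
  fixes X :: "'a::{real_inner,banach} \<Rightarrow> 'a" and q :: real
  assumes X: "bounded_linear X" and q: "0 \<le> q" "q < 1"
    and contraction: "\<And>x. norm (X x) \<le> q * norm x"
begin

lemma norm_funpow_le: "norm ((X ^^ n) x) \<le> q ^ n * norm x"
proof (induction n)
  case (Suc n)
  have "norm ((X ^^ Suc n) x) \<le> q * norm ((X ^^ n) x)" using contraction by simp
  also have "\<dots> \<le> q * (q ^ n * norm x)" using Suc q(1) by (rule mult_left_mono)
  finally show ?case by simp
qed simp

lemma summable_sqrt_coeff_blinfun: "summable (\<lambda>n. norm (sqrt_coeff n *\<^sub>R Blinfun (X ^^ n)))"
proof (rule summable_comparison_test'[OF summable_geometric[of q]])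
  fix n
  have "norm (Blinfun (X ^^ n)) \<le> q ^ n"
    using q(1) norm_funpow_le
    by (intro norm_blinfun_bound) (simp_all add: bounded_linear_Blinfun_apply bounded_linear_funpow X)
  then have "\<bar>sqrt_coeff n\<bar> * norm (Blinfun (X ^^ n)) \<le> 1 * q ^ n"
    using abs_sqrt_coeff_le by (intro mult_mono) auto
  then show "norm (norm (sqrt_coeff n *\<^sub>R Blinfun (X ^^ n))) \<le> q ^ n" by simp
qed (use q in simp)

lemma
  shows sqrt_series_eq_blinfun: "sqrt_series X = blinfun_apply (\<Sum>n. sqrt_coeff n *\<^sub>R Blinfun (X ^^ n))"
    and sqrt_series_sums: "(\<lambda>n. sqrt_coeff n *\<^sub>R (X ^^ n) x) sums sqrt_series X x"
proof -
  have sums: "(\<lambda>n. sqrt_coeff n *\<^sub>R (X ^^ n) y) sums blinfun_apply (\<Sum>n. sqrt_coeff n *\<^sub>R Blinfun (X ^^ n)) y"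
    for y
    using bounded_linear.sums[OF blinfun.bounded_linear_left
        summable_sums[OF summable_norm_cancel[OF summable_sqrt_coeff_blinfun]], of y]
    by (simp add: blinfun.scaleR_left bounded_linear_Blinfun_apply bounded_linear_funpow X)
  then show eq: "sqrt_series X = blinfun_apply (\<Sum>n. sqrt_coeff n *\<^sub>R Blinfun (X ^^ n))"
    by (auto simp: sqrt_series_def sums_iff)
  show "(\<lambda>n. sqrt_coeff n *\<^sub>R (X ^^ n) x) sums sqrt_series X x" by (simp add: eq sums)
qed

lemma bounded_linear_sqrt_series: "bounded_linear (sqrt_series X)"
  by (simp add: sqrt_series_eq_blinfun blinfun.bounded_linear_right)

lemma sqrt_series_commute:
  assumes S: "bounded_linear S" and SX: "\<And>x. S (X x) = X (S x)"
  shows "S (sqrt_series X x) = sqrt_series X (S x)"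
proof -
  have "S ((X ^^ n) y) = (X ^^ n) (S y)" for n y by (induction n) (simp_all add: SX)
  then have "(\<lambda>n. sqrt_coeff n *\<^sub>R (X ^^ n) (S x)) sums S (sqrt_series X x)"
    using bounded_linear.sums[OF S sqrt_series_sums] by (simp add: linear_scale[OF bounded_linear.linear[OF S]])
  then show ?thesis using sqrt_series_sums sums_unique2 by blast
qed

lemma sqrt_series_square: "sqrt_series X (sqrt_series X x) = x - X x"
proof -
  define u where "u i = sqrt_coeff i *\<^sub>R Blinfun (X ^^ i)" for i
  define v where "v j = sqrt_coeff j *\<^sub>R (X ^^ j) x" for j
  have "norm (v j) \<le> q ^ j * norm x" for j
  proof -
    have "\<bar>sqrt_coeff j\<bar> * norm ((X ^^ j) x) \<le> 1 * (q ^ j * norm x)"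
      using abs_sqrt_coeff_le norm_funpow_le by (intro mult_mono) auto
    then show ?thesis by (simp add: v_def)
  qed
  then have "summable (\<lambda>j. norm (v j))"
    using q by (intro summable_comparison_test'[OF summable_mult2[OF summable_geometric]]) auto
  from Cauchy_product_sums_bilinear[OF bounded_bilinear_blinfun_apply
      summable_sqrt_coeff_blinfun[folded u_def] this]
  have "(\<lambda>k. \<Sum>i\<le>k. blinfun_apply (u i) (v (k - i))) sums sqrt_series X (sqrt_series X x)"
    using sqrt_series_sums[of x] by (simp add: u_def v_def sqrt_series_eq_blinfun sums_iff)
  moreover have "(\<Sum>i\<le>k. blinfun_apply (u i) (v (k - i)))
      = (if k = 0 then 1 else if k = 1 then -1 else 0) *\<^sub>R (X ^^ k) x" for k
  proof -
    have "blinfun_apply (u i) (v (k - i)) = (sqrt_coeff i * sqrt_coeff (k - i)) *\<^sub>R (X ^^ k) x"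
      if "i \<le> k" for i
      using that linear_scale[OF bounded_linear.linear[OF bounded_linear_funpow[OF X]]]
      by (simp add: u_def v_def blinfun.scaleR_left bounded_linear_Blinfun_apply
          bounded_linear_funpow X flip: funpow_add[THEN fun_cong, unfolded comp_def])
    then show ?thesis by (simp add: scaleR_sum_left[symmetric] sqrt_coeff_convolution)
  qed
  moreover have "(\<lambda>k. (if k = 0 then 1 else if k = 1 then -1 else 0) *\<^sub>R (X ^^ k) x) sums (x - X x)"
    using sums_finite[of "{0, 1}" "\<lambda>k. (if k = 0 then 1 else if k = 1 then -1 else 0) *\<^sub>R (X ^^ k) x"]
    by simp
  ultimately show ?thesis using sums_unique2 by force
qed

lemma sqrt_series_symmetric:
  assumes sym: "\<And>x y. inner (X x) y = inner x (X y)"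
  shows "inner (sqrt_series X x) y = inner x (sqrt_series X y)"
proof -
  have sym_n: "inner ((X ^^ n) x) y = inner x ((X ^^ n) y)" for n x y
    by (induction n arbitrary: x y) (simp_all add: sym funpow_swap1)
  have "(\<lambda>n. inner (sqrt_coeff n *\<^sub>R (X ^^ n) y) x) = (\<lambda>n. inner (sqrt_coeff n *\<^sub>R (X ^^ n) x) y)"
  proof
    fix n show "inner (sqrt_coeff n *\<^sub>R (X ^^ n) y) x = inner (sqrt_coeff n *\<^sub>R (X ^^ n) x) y"
      using sym_n[of n x y] by (simp add: inner_commute[of x])
  qed
  moreover have "(\<lambda>n. inner (sqrt_coeff n *\<^sub>R (X ^^ n) y) x) sums inner (sqrt_series X y) x"
    by (rule bounded_linear.sums[OF bounded_linear_inner_left sqrt_series_sums])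
  ultimately have "(\<lambda>n. inner (sqrt_coeff n *\<^sub>R (X ^^ n) x) y) sums inner (sqrt_series X y) x"
    by (simp only:)
  moreover have "(\<lambda>n. inner (sqrt_coeff n *\<^sub>R (X ^^ n) x) y) sums inner (sqrt_series X x) y"
    by (rule bounded_linear.sums[OF bounded_linear_inner_left sqrt_series_sums])
  ultimately show ?thesis by (metis sums_unique2 inner_commute)
qed

lemma sqrt_series_lower_bound: "sqrt (1 - q) * (norm y)\<^sup>2 \<le> inner (sqrt_series X y) y"
proof (rule sums_le)
  show "(\<lambda>n. sqrt_coeff n * q ^ n * (norm y)\<^sup>2) sums (sqrt (1 - q) * (norm y)\<^sup>2)"
    using q by (intro sums_mult2 sqrt_coeff_sums) simp
  show "(\<lambda>n. inner (sqrt_coeff n *\<^sub>R (X ^^ n) y) y) sums inner (sqrt_series X y) y"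
    by (rule bounded_linear.sums[OF bounded_linear_inner_left sqrt_series_sums])
  fix n
  show "sqrt_coeff n * q ^ n * (norm y)\<^sup>2 \<le> inner (sqrt_coeff n *\<^sub>R (X ^^ n) y) y"
  proof (cases "n = 0")
    case False
    have "inner ((X ^^ n) y) y \<le> q ^ n * norm y * norm y"
      using norm_cauchy_schwarz[of "(X ^^ n) y" y] norm_funpow_le[of n y]
      by (meson mult_right_mono norm_ge_zero order_trans)
    then show ?thesis
      using mult_left_mono_neg[OF _ sqrt_coeff_nonpos, of "inner ((X ^^ n) y) y" "q ^ n * norm y * norm y" n]
        False by (simp add: power2_eq_square mult_ac)
  qed (simp add: power2_norm_eq_inner sqrt_coeff_def)
qed

end

lemma norm_diff_scaled_le:
  fixes C :: "'a::real_inner \<Rightarrow> 'a"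
  assumes N: "0 < N" "b \<le> N" "\<bar>K\<bar> \<le> N" and "0 \<le> b"
    and lower: "b * (norm x)\<^sup>2 \<le> inner (C x) x" and upper: "(norm (C x))\<^sup>2 \<le> K * inner (C x) x"
  shows "norm (x - (1/N) *\<^sub>R C x) \<le> sqrt (1 - b/N) * norm x"
proof -
  define v where "v = inner (C x) x"
  have "0 \<le> b * (norm x)\<^sup>2" using \<open>0 \<le> b\<close> by simp
  then have v: "0 \<le> v" using lower v_def by linarith
  have "(norm (C x))\<^sup>2 \<le> N * v"
    using upper mult_right_mono[OF order_trans[OF abs_ge_self N(3)] v] by (simp add: v_def)
  then have "(norm (C x))\<^sup>2 / N\<^sup>2 \<le> v / N"
    using N(1) by (simp add: field_simps power2_eq_square mult_le_cancel_left_pos)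
  moreover have "(norm (x - (1/N) *\<^sub>R C x))\<^sup>2 = (norm x)\<^sup>2 - 2 * (v / N) + (norm (C x))\<^sup>2 / N\<^sup>2"
    unfolding power2_norm_eq_inner v_def
    using N(1) by (simp add: inner_diff_left inner_diff_right inner_commute[of x "C x"] power2_eq_square
        field_simps)
  moreover have "b * (norm x)\<^sup>2 / N \<le> v / N" using lower N(1) by (simp add: v_def divide_right_mono)
  ultimately have "(norm (x - (1/N) *\<^sub>R C x))\<^sup>2 \<le> (norm x)\<^sup>2 - b * (norm x)\<^sup>2 / N"
    by linarith
  also have "\<dots> = (sqrt (1 - b/N) * norm x)\<^sup>2"
    using N by (simp add: power_mult_distrib field_simps)
  finally show ?thesis using N by (auto elim: power2_le_imp_le)
qed

lemma strictly_positive_sqrt_exists: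
  fixes C :: "'a::{real_inner,banach} \<Rightarrow> 'a"
  assumes C: "bounded_linear C" and sym: "\<And>x y. inner (C x) y = inner x (C y)"
    and b: "0 < b" "\<And>x. b * (norm x)\<^sup>2 \<le> inner (C x) x"
    and K: "\<And>x. (norm (C x))\<^sup>2 \<le> K * inner (C x) x"
  obtains R \<epsilon> where "bounded_linear R" "\<And>x. R (R x) = C x" "\<And>x y. inner (R x) y = inner x (R y)"
    and "0 < \<epsilon>" "\<And>y. \<epsilon> * (norm y)\<^sup>2 \<le> inner (R y) y"
    and "\<And>S x. bounded_linear S \<Longrightarrow> (\<And>y. S (C y) = C (S y)) \<Longrightarrow> S (R x) = R (S x)"
proof -
  \<comment> \<open>\<open>C = N (1 - X)\<close> with \<open>X\<close> a symmetric strict contraction; take \<open>R = \<surd>N \<surd>(1 - X)\<close>\<close>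
  define N where "N = \<bar>K\<bar> + b"
  define X where "X x = x - (1/N) *\<^sub>R C x" for x
  define q where "q = sqrt (1 - b/N)"
  have N: "0 < N" "b \<le> N" "\<bar>K\<bar> \<le> N" using b by (auto simp: N_def)
  have q: "0 \<le> q" "q < 1" using N b by (auto simp: q_def field_simps)
  have X: "bounded_linear X"
    unfolding X_def[abs_def]
    by (intro bounded_linear_sub bounded_linear_ident bounded_linear_compose[OF bounded_linear_scaleR_right C])
  have contraction: "norm (X x) \<le> q * norm x" for x
    unfolding X_def q_def by (rule norm_diff_scaled_le[OF N less_imp_le[OF b(1)] b(2) K])
  note series = X q contraction
  define R where "R x = sqrt N *\<^sub>R sqrt_series X x" for x
  have lin: "linear (sqrt_series X)" by (rule bounded_linear.linear[OF bounded_linear_sqrt_series[OF series]])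
  show ?thesis
  proof (rule that)
    show "bounded_linear R"
      unfolding R_def[abs_def]
      by (rule bounded_linear_compose[OF bounded_linear_scaleR_right bounded_linear_sqrt_series[OF series]])
    show "R (R x) = C x" for x
      using N(1) by (simp add: R_def linear_scale[OF lin] sqrt_series_square[OF series] X_def)
    have "inner (X x) y = inner x (X y)" for x y
      by (simp add: X_def inner_diff_left inner_diff_right sym)
    then show "inner (R x) y = inner x (R y)" for x y
      by (simp add: R_def sqrt_series_symmetric[OF series])
    show "0 < sqrt N * sqrt (1 - q)" using N q by simp
    show "sqrt N * sqrt (1 - q) * (norm y)\<^sup>2 \<le> inner (R y) y" for y
      using sqrt_series_lower_bound[OF series, of y] N(1) by (simp add: R_def mult.assoc)
  next
    fix S x assume S: "bounded_linear S" and SC: "\<And>y. S (C y) = C (S y)"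
    have "S (X y) = X (S y)" for y
      by (simp add: X_def SC linear_diff[OF bounded_linear.linear[OF S]]
          linear_scale[OF bounded_linear.linear[OF S]])
    then show "S (R x) = R (S x)"
      by (simp add: R_def sqrt_series_commute[OF series S] linear_scale[OF bounded_linear.linear[OF S]])
  qed
qed

lemma op_sqrt_eqI:
  assumes R: "bounded_clinear R" "positive_op R" "R \<circ> R = C"
    and strict: "0 < \<epsilon>" "\<And>y. \<epsilon> * (norm y)\<^sup>2 \<le> inner (R y) y"
    and commute: "\<And>S x. bounded_linear S \<Longrightarrow> (\<And>y. S (C y) = C (S y)) \<Longrightarrow> S (R x) = R (S x)"
  shows "op_sqrt C = R"
  unfolding op_sqrt_def
proof (rule the_equality)
  fix S assume "bounded_clinear S \<and> positive_op S \<and> S \<circ> S = C"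
  then have S: "bounded_clinear S" "positive_op S" "\<And>x. S (S x) = C x" by (auto simp: fun_eq_iff)
  have RR: "R (R x) = C x" for x using R(3) by (auto simp: fun_eq_iff)
  have "S (C y) = C (S y)" for y
  proof -
    have "S (C y) = S (S (S y))" by (simp add: S(3))
    also have "\<dots> = C (S y)" by (rule S(3))
    finally show ?thesis .
  qed
  then have SR: "S (R x) = R (S x)" for x by (rule commute[OF bounded_clinear_linear[OF S(1)]])
  show "S = R"
  proof
    fix x
    define y where "y = S x - R x"
    \<comment> \<open>positivity of \<open>S\<close> and strict positivity of \<open>R\<close> are incompatible unless \<open>y = 0\<close>\<close>
    have "S y = - R y"
      by (simp add: y_def bounded_clinear_diff[OF S(1)] bounded_clinear_diff[OF R(1)] S(3) RR SR)
    moreover have "0 \<le> Re (cinner (S y) y)" using S(2) by (simp add: positive_op_def less_eq_complex_def)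
    ultimately have "\<epsilon> * (norm y)\<^sup>2 \<le> 0" using strict(2)[of y] by simp
    then show "S x = R x" using strict(1) by (simp add: y_def mult_le_0_iff)
  qed
qed (use R in blast)

lemma gram_form_bounds:
  fixes V :: "'a::chilbert_space \<Rightarrow> 'a"
  assumes V: "bounded_clinear V" "bounded_below V"
  obtains b K where "0 < b" "\<And>x. b * (norm x)\<^sup>2 \<le> inner ((cadjoint V \<circ> V) x) x"
    and "\<And>x. (norm ((cadjoint V \<circ> V) x))\<^sup>2 \<le> K * inner ((cadjoint V \<circ> V) x) x"
proof -
  obtain b where b: "b > 0" "\<And>x. b * norm x \<le> norm (V x)" using V(2) bounded_below_def by blast
  obtain K where K: "\<And>y. norm (cadjoint V y) \<le> norm y * K"
    using bounded_clinear_bound[OF bounded_clinear_cadjoint[OF V(1)]] by blast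
  have form: "inner ((cadjoint V \<circ> V) x) x = (norm (V x))\<^sup>2" for x
    using arg_cong[OF cinner_gram[OF V(1), of x x], of Re] by (simp add: power2_norm_eq_inner)
  show ?thesis
  proof (rule that[of "b\<^sup>2" "K\<^sup>2"])
    show "0 < b\<^sup>2" using b(1) by simp
    show "b\<^sup>2 * (norm x)\<^sup>2 \<le> inner ((cadjoint V \<circ> V) x) x" for x
    proof -
      have "(b * norm x)\<^sup>2 \<le> (norm (V x))\<^sup>2" using b by (intro power_mono) auto
      then show ?thesis by (simp only: form power_mult_distrib)
    qed
    show "(norm ((cadjoint V \<circ> V) x))\<^sup>2 \<le> K\<^sup>2 * inner ((cadjoint V \<circ> V) x) x" for x
    proof -
      have "norm ((cadjoint V \<circ> V) x) \<le> norm (V x) * K" using K by simp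
      then have "(norm ((cadjoint V \<circ> V) x))\<^sup>2 \<le> (norm (V x) * K)\<^sup>2" by (rule power_mono) simp
      then show ?thesis by (simp only: form power_mult_distrib mult.commute)
    qed
  qed
qed

lemma positive_sqrt_gram_exists:
  fixes V :: "'a::chilbert_space \<Rightarrow> 'a"
  assumes V: "bounded_clinear V" "bounded_below V"
  obtains S \<epsilon> where "bounded_clinear S" "positive_op S" "S \<circ> S = cadjoint V \<circ> V" "cadjoint S = S"
    and "0 < \<epsilon>" "\<And>y. \<epsilon> * (norm y)\<^sup>2 \<le> inner (S y) y"
    and "\<And>U x. bounded_linear U \<Longrightarrow> (\<And>y. U ((cadjoint V \<circ> V) y) = (cadjoint V \<circ> V) (U y)) \<Longrightarrow>
      U (S x) = S (U x)"
proof -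
  let ?C = "cadjoint V \<circ> V"
  have C: "bounded_clinear ?C" by (rule bounded_clinear_gram[OF V(1)])
  have sym: "inner (?C x) y = inner x (?C y)" for x y
    using arg_cong[OF cinner_selfadjoint[OF C selfadjoint_gram[OF V(1)], of x y], of Re] by simp
  obtain b K where bounds: "0 < b" "\<And>x. b * (norm x)\<^sup>2 \<le> inner (?C x) x"
    "\<And>x. (norm (?C x))\<^sup>2 \<le> K * inner (?C x) x"
    using gram_form_bounds[OF V] by blast
  obtain S \<epsilon> where Sl: "bounded_linear S" and SS: "\<And>x. S (S x) = ?C x"
    and Ssym: "\<And>x y. inner (S x) y = inner x (S y)"
    and strict: "0 < \<epsilon>" "\<And>y. \<epsilon> * (norm y)\<^sup>2 \<le> inner (S y) y"
    and commute: "\<And>U x. bounded_linear U \<Longrightarrow> (\<And>y. U (?C y) = ?C (U y)) \<Longrightarrow> U (S x) = S (U x)"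
    using strictly_positive_sqrt_exists[OF bounded_clinear_linear[OF C] sym bounds] by blast
  \<comment> \<open>complex scalars commute with \<open>?C\<close>, hence with its real square root\<close>
  have "S (scaleC c x) = scaleC c (S x)" for c x
  proof -
    have "scaleC c (?C y) = ?C (scaleC c y)" for y by (simp only: bounded_clinear_scaleC[OF C])
    from commute[OF bounded_linear_scaleC this] show ?thesis by simp
  qed
  with Sl have S: "bounded_clinear S" by (simp add: bounded_clinear_def)
  have Ssa: "cadjoint S = S" by (rule cadjoint_eqI[OF S cinner_adjoint_if_inner_adjoint[OF S Ssym]])
  have "0 \<le> inner (S x) x" for x
    using strict(2)[of x] mult_nonneg_nonneg[OF less_imp_le[OF strict(1)] zero_le_power2[of "norm x"]]
    by linarith
  then have "positive_op S"
    using positive_op_iff_real_form[OF cinner_selfadjoint_self[OF S Ssa]] by blast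
  then show ?thesis using that S SS Ssa strict commute by (simp add: fun_eq_iff)
qed

lemma bounded_below_if_strictly_positive:
  fixes S :: "'a::real_inner \<Rightarrow> 'a"
  assumes "0 < \<epsilon>" "\<And>y. \<epsilon> * (norm y)\<^sup>2 \<le> inner (S y) y"
  shows "bounded_below S"
proof -
  have "\<epsilon> * norm y \<le> norm (S y)" for y
  proof -
    have "\<epsilon> * (norm y)\<^sup>2 \<le> norm (S y) * norm y"
      using assms(2)[of y] norm_cauchy_schwarz[of "S y" y] by linarith
    then show ?thesis by (cases "y = 0") (auto simp: power2_eq_square mult_le_cancel_right)
  qed
  then show ?thesis using assms(1) unfolding bounded_below_def by blast
qed

lemma
  fixes V :: "'a::chilbert_space \<Rightarrow> 'a"
  assumes V: "bounded_clinear V" "bounded_below V"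
  defines "R \<equiv> op_sqrt (cadjoint V \<circ> V)"
  shows bounded_clinear_op_sqrt_gram: "bounded_clinear R"
    and op_sqrt_gram_square: "R (R x) = cadjoint V (V x)"
    and selfadjoint_op_sqrt_gram: "cadjoint R = R"
    and bounded_below_op_sqrt_gram: "bounded_below R"
proof -
  obtain S \<epsilon> where S: "bounded_clinear S" "positive_op S" "S \<circ> S = cadjoint V \<circ> V" "cadjoint S = S"
    and strict: "0 < \<epsilon>" "\<And>y. \<epsilon> * (norm y)\<^sup>2 \<le> inner (S y) y"
    and commute: "\<And>U x. bounded_linear U \<Longrightarrow> (\<And>y. U ((cadjoint V \<circ> V) y) = (cadjoint V \<circ> V) (U y)) \<Longrightarrow>
      U (S x) = S (U x)"
    using positive_sqrt_gram_exists[OF V] by blast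
  have RS: "R = S" unfolding R_def by (rule op_sqrt_eqI[OF S(1-3) strict commute])
  show "bounded_clinear R" "cadjoint R = R" "bounded_below R"
    using S bounded_below_if_strictly_positive[OF strict] by (simp_all add: RS)
  show "R (R x) = cadjoint V (V x)" using S(3) by (simp add: RS fun_eq_iff)
qed

lemma
  fixes V :: "'a::chilbert_space \<Rightarrow> 'a"
  assumes V: "bounded_clinear V" "bounded_below V"
  defines "R \<equiv> op_sqrt (cadjoint V \<circ> V)"
  shows bounded_clinear_inv_op_sqrt_gram: "bounded_clinear (inv R)"
    and selfadjoint_inv_op_sqrt_gram: "cadjoint (inv R) = inv R"
    and op_sqrt_gram_inv: "R (inv R x) = x"
    and inv_op_sqrt_gram_square: "inv R (inv R x) = inv (cadjoint V \<circ> V) x"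
proof -
  note R = bounded_clinear_op_sqrt_gram[OF V, folded R_def] op_sqrt_gram_square[OF V, folded R_def]
    selfadjoint_op_sqrt_gram[OF V, folded R_def] bounded_below_op_sqrt_gram[OF V, folded R_def]
  have bij: "bij R" by (rule bij_if_selfadjoint_bounded_below[OF R(1,3,4)])
  show RI: "R (inv R y) = y" for y using bij by (simp add: bij_is_surj surj_f_inv_f)
  show I: "bounded_clinear (inv R)" by (rule bounded_clinear_inv[OF R(1,4) bij])
  show "cadjoint (inv R) = inv R" by (rule cadjoint_inv[OF R(1,3) bij I])
  have "(cadjoint V \<circ> V) (inv R (inv R x)) = R (R (inv R (inv R x)))" by (simp add: R(2))
  also have "\<dots> = x" by (simp add: RI)
  finally show "inv R (inv R x) = inv (cadjoint V \<circ> V) x" using bij_gram[OF V] by (metis bij_inv_eq_iff)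
qed

lemma norm_cadjoint_sqrt_conj:
  fixes V W :: "'a::chilbert_space \<Rightarrow> 'a"
  assumes V: "bounded_clinear V" "bounded_below V" and W: "bounded_clinear W"
  defines "R \<equiv> op_sqrt (cadjoint V \<circ> V)"
  shows "(norm ((cadjoint (R \<circ> W \<circ> inv R) \<circ> inv R \<circ> cadjoint V) h))\<^sup>2
      = Re (cinner ((V \<circ> W \<circ> inv (cadjoint V \<circ> V) \<circ> cadjoint W \<circ> cadjoint V) h) h)"
proof -
  note R = bounded_clinear_op_sqrt_gram[OF V, folded R_def] selfadjoint_op_sqrt_gram[OF V, folded R_def]
    bounded_clinear_inv_op_sqrt_gram[OF V, folded R_def] selfadjoint_inv_op_sqrt_gram[OF V, folded R_def]
    op_sqrt_gram_inv[OF V, folded R_def] inv_op_sqrt_gram_square[OF V, folded R_def]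
  define w where "w = cadjoint W (cadjoint V h)"
  have "cadjoint (R \<circ> W \<circ> inv R) = inv R \<circ> cadjoint W \<circ> R"
    using R(1-4) W by (simp add: cadjoint_comp bounded_clinear_comp comp_assoc)
  then have "(norm ((cadjoint (R \<circ> W \<circ> inv R) \<circ> inv R \<circ> cadjoint V) h))\<^sup>2
      = Re (cinner (inv R w) (inv R w))"
    by (simp add: R(5) w_def cinner_self)
  also have "cinner (inv R w) (inv R w) = cinner (inv (cadjoint V \<circ> V) w) w"
    by (simp add: cinner_selfadjoint[OF R(3,4), symmetric] R(6))
  also have "\<dots> = cinner ((V \<circ> W \<circ> inv (cadjoint V \<circ> V) \<circ> cadjoint W \<circ> cadjoint V) h) h"
    by (simp add: w_def cinner_cadjoint_right[OF V(1)] cinner_cadjoint_right[OF W])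
  finally show ?thesis .
qed

lemma norm_sqrt_conj:
  fixes V W :: "'a::chilbert_space \<Rightarrow> 'a"
  assumes V: "bounded_clinear V" "bounded_below V" and W: "bounded_clinear W"
  defines "R \<equiv> op_sqrt (cadjoint V \<circ> V)" and "C \<equiv> cadjoint V \<circ> V"
  shows "(norm ((R \<circ> W \<circ> inv R \<circ> inv R \<circ> cadjoint V) h))\<^sup>2
      = Re (cinner ((V \<circ> inv C \<circ> cadjoint (V \<circ> W) \<circ> (V \<circ> W) \<circ> inv C \<circ> cadjoint V) h) h)"
proof -
  note R = bounded_clinear_op_sqrt_gram[OF V, folded R_def] selfadjoint_op_sqrt_gram[OF V, folded R_def]
    op_sqrt_gram_square[OF V, folded R_def] inv_op_sqrt_gram_square[OF V, folded R_def C_def]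
  note CI = bounded_clinear_inv_gram[OF V, folded C_def] cadjoint_inv_gram[OF V, folded C_def]
  define u where "u = inv C (cadjoint V h)"
  have "(norm ((R \<circ> W \<circ> inv R \<circ> inv R \<circ> cadjoint V) h))\<^sup>2 = Re (cinner (R (W u)) (R (W u)))"
    by (simp add: R(4) u_def cinner_self)
  also have "cinner (R (W u)) (R (W u)) = cinner (V (W u)) (V (W u))"
    by (simp add: cinner_selfadjoint[OF R(1,2), symmetric] R(3) cinner_cadjoint_left[OF V(1)])
  also have "\<dots> = cinner ((cadjoint (V \<circ> W) \<circ> (V \<circ> W)) u) u"
    using cinner_gram[OF bounded_clinear_comp[OF V(1) W], of u u] by simp
  also have "\<dots> = cinner (inv C ((cadjoint (V \<circ> W) \<circ> (V \<circ> W)) u)) (cadjoint V h)"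
    by (simp only: u_def cinner_selfadjoint[OF CI])
  also have "\<dots> = cinner ((V \<circ> inv C \<circ> cadjoint (V \<circ> W) \<circ> (V \<circ> W) \<circ> inv C \<circ> cadjoint V) h) h"
    by (simp add: u_def cinner_cadjoint_right[OF V(1)])
  finally show ?thesis .
qed

lemma adjoint_on_invariant:
  assumes M: "closed_csubspace M" and W: "bounded_clinear W" and inv: "\<And>x. x \<in> M \<Longrightarrow> W x \<in> M"
  shows "adjoint_on M W = (\<lambda>x. if x \<in> M then orth_proj M (cadjoint W x) else 0)"
    (is "_ = ?S")
  unfolding adjoint_on_def
proof (rule the_equality)
  have adj: "cinner (W x) y = cinner x (?S y)" if "x \<in> M" "y \<in> M" for x y
    using that by (simp add: cinner_orth_proj[OF M, symmetric] orth_proj_id[OF M] cinner_cadjoint_right[OF W])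
  then show "(\<forall>x\<in>M. ?S x \<in> M) \<and> (\<forall>x. x \<notin> M \<longrightarrow> ?S x = 0) \<and>
      (\<forall>x\<in>M. \<forall>y\<in>M. cinner (W x) y = cinner x (?S y))"
    by (simp add: orth_proj_in[OF M])
  fix S assume S: "(\<forall>x\<in>M. S x \<in> M) \<and> (\<forall>x. x \<notin> M \<longrightarrow> S x = 0) \<and>
      (\<forall>x\<in>M. \<forall>y\<in>M. cinner (W x) y = cinner x (S y))"
  show "S = ?S"
  proof
    fix y show "S y = ?S y"
    proof (cases "y \<in> M")
      case True
      have "S y - ?S y \<in> M" using S True orth_proj_in[OF M] closed_csubspace_diff[OF M] by simp
      then have "cinner (S y - ?S y) (S y - ?S y) = 0"
        using S True adj by (simp add: cinner_diff_right)
      then show ?thesis by simp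
    qed (use S in simp)
  qed
qed

lemma hyponormal_on_iff:
  assumes M: "closed_csubspace M" and W: "bounded_clinear W" and inv: "\<And>x. x \<in> M \<Longrightarrow> W x \<in> M"
  shows "hyponormal_on M W \<longleftrightarrow> (\<forall>x\<in>M. (norm (orth_proj M (cadjoint W x)))\<^sup>2 \<le> (norm (W x))\<^sup>2)"
proof -
  have form: "cinner (adjoint_on M W (W x) - W (adjoint_on M W x)) x
      = complex_of_real ((norm (W x))\<^sup>2 - (norm (orth_proj M (cadjoint W x)))\<^sup>2)" if "x \<in> M" for x
  proof -
    have "cinner (orth_proj M (cadjoint W (W x))) x = cinner (W x) (W x)"
      using that by (simp add: cinner_orth_proj[OF M] orth_proj_id[OF M] cinner_cadjoint_left[OF W])
    moreover have "cinner (W (orth_proj M (cadjoint W x))) x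
        = cinner (orth_proj M (cadjoint W x)) (cadjoint W x)"
      by (rule cinner_cadjoint_right[OF W])
    ultimately show ?thesis
      using that inv by (simp add: adjoint_on_invariant[OF M W inv] cinner_diff_left cinner_self
          cinner_orth_proj_self[OF M])
  qed
  then show ?thesis
    unfolding hyponormal_on_def by (simp add: form complex_of_real_nonneg_iff del: of_real_diff)
qed

lemma tendsto_contraction_sandwich:
  fixes Q :: "nat \<Rightarrow> 'a::real_normed_vector \<Rightarrow> 'a"
  assumes lim: "\<And>h. (\<lambda>k. Q k h) \<longlonglongrightarrow> P h" and Q: "\<And>k. linear (Q k)"
    and contraction: "\<And>k x. norm (Q k x) \<le> norm x" and L: "bounded_linear L"
  shows "(\<lambda>k. Q k (L (Q k h))) \<longlonglongrightarrow> P (L (P h))"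
proof -
  have "(\<lambda>k. L (Q k h) - L (P h)) \<longlonglongrightarrow> 0"
    using bounded_linear.tendsto[OF L lim] by (rule LIM_zero)
  then have "(\<lambda>k. norm (L (Q k h) - L (P h))) \<longlonglongrightarrow> 0" by (rule tendsto_norm_zero)
  then have "(\<lambda>k. Q k (L (Q k h) - L (P h))) \<longlonglongrightarrow> 0"
    by (rule Lim_null_comparison[OF always_eventually, rotated]) (use contraction in blast)
  from tendsto_add[OF lim[of "L (P h)"] this] show ?thesis by (simp add: linear_diff[OF Q])
qed

section \<open>The Cauchy dual\<close>

locale left_invertible_operator =
  fixes T :: "'a::chilbert_space \<Rightarrow> 'a"
  assumes bounded: "bounded_clinear T" and left_invertible: "left_invertible T"
begin

abbreviation G :: "'a \<Rightarrow> 'a" where "G \<equiv> cadjoint T \<circ> T"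
abbreviation T' :: "'a \<Rightarrow> 'a" where "T' \<equiv> cauchy_dual T"
abbreviation C :: "nat \<Rightarrow> 'a \<Rightarrow> 'a" where "C k \<equiv> (cadjoint T' ^^ k) \<circ> (T' ^^ k)"
abbreviation Hu :: "'a set" where "Hu \<equiv> \<Inter>n. range (T' ^^ n)"
abbreviation P :: "'a \<Rightarrow> 'a" where "P \<equiv> orth_proj Hu"
abbreviation A :: "'a \<Rightarrow> 'a" where "A \<equiv> P \<circ> T' \<circ> P \<circ> cadjoint T' \<circ> P"
abbreviation B :: "'a \<Rightarrow> 'a" where "B \<equiv> P \<circ> inv G \<circ> P"

lemma
  shows bounded_clinear_inv_G: "bounded_clinear (inv G)"
    and selfadjoint_inv_G: "cadjoint (inv G) = inv G"
    and G_inv_G: "cadjoint T (T (inv G x)) = x"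
proof -
  note T = bounded bounded_below_if_left_invertible[OF left_invertible]
  show "bounded_clinear (inv G)" "cadjoint (inv G) = inv G"
    by (rule bounded_clinear_inv_gram[OF T], rule cadjoint_inv_gram[OF T])
  show "cadjoint T (T (inv G x)) = x"
    using bij_gram[OF T] by (metis bij_is_surj comp_apply surj_f_inv_f)
qed

lemma bounded_clinear_T': "bounded_clinear T'"
  unfolding cauchy_dual_def by (rule bounded_clinear_comp[OF bounded bounded_clinear_inv_G])

lemma cadjoint_T': "cadjoint T' = inv G \<circ> cadjoint T"
  unfolding cauchy_dual_def
  by (simp add: cadjoint_comp[OF bounded bounded_clinear_inv_G] selfadjoint_inv_G)

lemma cadjoint_T'_T': "cadjoint T' (T' x) = inv G x"
  by (simp only: cadjoint_T' comp_apply) (simp add: cauchy_dual_def G_inv_G)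

lemma bounded_below_power: "bounded_below (T' ^^ k)"
proof -
  have "cadjoint T \<circ> T' = id" by (simp add: fun_eq_iff cauchy_dual_def G_inv_G)
  then have "left_invertible T'"
    unfolding left_invertible_def using bounded_clinear_cadjoint[OF bounded] by blast
  then show ?thesis by (intro bounded_below_if_left_invertible left_invertible_funpow)
qed

lemmas T'_power = bounded_clinear_funpow[OF bounded_clinear_T'] bounded_below_power

lemma cadjoint_power: "cadjoint (T' ^^ k) = cadjoint T' ^^ k"
  by (rule cadjoint_funpow[OF bounded_clinear_T'])

lemma closed_csubspace_Hu: "closed_csubspace Hu"
  by (intro closed_csubspace_INT closed_csubspace_range T'_power)

lemma T'_Hu: "x \<in> Hu \<Longrightarrow> T' x \<in> Hu"
  by (auto simp: image_iff) (metis funpow_swap1)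

lemma orth_proj_range_power: "orth_proj (range (T' ^^ k)) = T' ^^ k \<circ> inv (C k) \<circ> cadjoint T' ^^ k"
  by (simp add: orth_proj_range[OF T'_power] cadjoint_power)

lemma tendsto_orth_proj_range_power: "(\<lambda>k. orth_proj (range (T' ^^ k)) h) \<longlonglongrightarrow> P h"
proof (rule orth_proj_decseq_tendsto)
  show "range (T' ^^ Suc k) \<subseteq> range (T' ^^ k)" for k by (auto simp: funpow_swap1)
qed (intro closed_csubspace_range T'_power)

lemma P_T'_P: "P (T' (P x)) = T' (P x)"
  by (intro orth_proj_id closed_csubspace_Hu T'_Hu orth_proj_in)

lemma P_cadjoint_T'_P: "P (cadjoint T' (P x)) = P (cadjoint T' x)"
proof -
  have "P (cadjoint T' (x - P x)) = 0"
  proof (rule orth_proj_eqI[OF closed_csubspace_Hu])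
    fix m assume "m \<in> Hu"
    then show "cinner (cadjoint T' (x - P x) - 0) m = 0"
      using orth_proj_orthogonal[OF closed_csubspace_Hu T'_Hu[OF \<open>m \<in> Hu\<close>], of x]
      by (simp add: cinner_cadjoint_left[OF bounded_clinear_T'])
  qed (use closed_csubspace_Hu in \<open>unfold closed_csubspace_def, blast\<close>)
  then show ?thesis
    by (simp add: bounded_clinear_diff[OF bounded_clinear_orth_proj[OF closed_csubspace_Hu]]
        bounded_clinear_diff[OF bounded_clinear_cadjoint[OF bounded_clinear_T']])
qed

lemma tendsto_A:
  "(\<lambda>k. ((T' ^^ (k+1)) \<circ> inv (C k) \<circ> (cadjoint T' ^^ (k+1))) h) \<longlonglongrightarrow> A h"
proof -
  have "((T' ^^ (k+1)) \<circ> inv (C k) \<circ> (cadjoint T' ^^ (k+1))) h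
      = T' (orth_proj (range (T' ^^ k)) (cadjoint T' h))" for k
    by (simp add: orth_proj_range_power funpow_swap1)
  moreover have "(\<lambda>k. T' (orth_proj (range (T' ^^ k)) (cadjoint T' h))) \<longlonglongrightarrow> T' (P (cadjoint T' h))"
    by (rule bounded_clinear_tendsto[OF bounded_clinear_T' tendsto_orth_proj_range_power])
  moreover have "T' (P (cadjoint T' h)) = A h"
    by (simp add: P_T'_P P_cadjoint_T'_P)
  ultimately show ?thesis by simp
qed

lemma tendsto_B:
  "(\<lambda>k. ((T' ^^ k) \<circ> inv (C k) \<circ> C (k+1) \<circ> inv (C k) \<circ> (cadjoint T' ^^ k)) h)
     \<longlonglongrightarrow> B h"
proof -
  have "C (k+1) = cadjoint T' ^^ k \<circ> inv G \<circ> T' ^^ k" for k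
    by (rule ext) (simp add: funpow_swap1[of "cadjoint T'"] cadjoint_T'_T')
  then have "((T' ^^ k) \<circ> inv (C k) \<circ> C (k+1) \<circ> inv (C k) \<circ> (cadjoint T' ^^ k)) h
      = orth_proj (range (T' ^^ k)) (inv G (orth_proj (range (T' ^^ k)) h))" for k
    by (simp only: orth_proj_range_power comp_apply)
  moreover have "(\<lambda>k. orth_proj (range (T' ^^ k)) (inv G (orth_proj (range (T' ^^ k)) h)))
      \<longlonglongrightarrow> P (inv G (P h))"
  proof (rule tendsto_contraction_sandwich[where P = P])
    note range_power = closed_csubspace_range[OF T'_power]
    show "(\<lambda>k. orth_proj (range (T' ^^ k)) x) \<longlonglongrightarrow> P x" for x
      by (rule tendsto_orth_proj_range_power)
    show "linear (orth_proj (range (T' ^^ k)))" for k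
      by (rule bounded_linear.linear[OF bounded_clinear_linear[OF bounded_clinear_orth_proj[OF range_power]]])
    show "norm (orth_proj (range (T' ^^ k)) x) \<le> norm x" for k x
      by (rule norm_orth_proj_le[OF range_power])
    show "bounded_linear (inv G)" by (rule bounded_clinear_linear[OF bounded_clinear_inv_G])
  qed
  ultimately show ?thesis by simp
qed

lemma cinner_A: "cinner (A h) h = complex_of_real ((norm (P (cadjoint T' (P h))))\<^sup>2)"
proof -
  have "cinner (A h) h = cinner (T' (P (cadjoint T' (P h)))) (P h)"
    by (simp add: cinner_orth_proj[OF closed_csubspace_Hu])
  also have "\<dots> = cinner (P (cadjoint T' (P h))) (cadjoint T' (P h))"
    by (rule cinner_cadjoint_right[OF bounded_clinear_T'])
  finally show ?thesis by (simp add: cinner_orth_proj_self[OF closed_csubspace_Hu])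
qed

lemma cinner_B: "cinner (B h) h = complex_of_real ((norm (T' (P h)))\<^sup>2)"
proof -
  have "cinner (B h) h = cinner (cadjoint T' (T' (P h))) (P h)"
    by (simp add: cinner_orth_proj[OF closed_csubspace_Hu] cadjoint_T'_T')
  then show ?thesis by (simp add: cinner_cadjoint_left[OF bounded_clinear_T'] cinner_self)
qed

lemma bounded_clinear_A: "bounded_clinear A"
  using bounded_clinear_orth_proj[OF closed_csubspace_Hu]
  by (intro bounded_clinear_comp bounded_clinear_T' bounded_clinear_cadjoint)

lemma bounded_clinear_B: "bounded_clinear B"
  using bounded_clinear_orth_proj[OF closed_csubspace_Hu]
  by (intro bounded_clinear_comp bounded_clinear_inv_G)

lemma cinner_B_minus_A:
  "cinner (B h - A h) h = complex_of_real ((norm (T' (P h)))\<^sup>2 - (norm (P (cadjoint T' (P h))))\<^sup>2)"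
  by (simp only: cinner_diff_left cinner_A cinner_B of_real_diff)

lemma cinner_defect:
  "cinner ((P \<circ> (\<lambda>h. inv G h - (T' \<circ> P \<circ> cadjoint T') h) \<circ> P) h) h
     = complex_of_real ((norm (T' (P h)))\<^sup>2 - (norm (P (cadjoint T' (P h))))\<^sup>2)"
  using cinner_A[of h] cinner_B[of h]
  by (simp add: bounded_clinear_diff[OF bounded_clinear_orth_proj[OF closed_csubspace_Hu]] cinner_diff_left)

lemma hyponormal_iff: "hyponormal_on Hu T' \<longleftrightarrow> (\<forall>h. (norm (P (cadjoint T' (P h))))\<^sup>2 \<le> (norm (T' (P h)))\<^sup>2)"
proof -
  have "(\<forall>x\<in>Hu. \<Phi> x) \<longleftrightarrow> (\<forall>h. \<Phi> (P h))" for \<Phi>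
    using orth_proj_in[OF closed_csubspace_Hu] orth_proj_id[OF closed_csubspace_Hu] by metis
  then show ?thesis by (simp only: hyponormal_on_iff[OF closed_csubspace_Hu bounded_clinear_T' T'_Hu])
qed

lemma lim_norm_cadjoint_sqrt_conj:
  "lim (\<lambda>k. (norm ((cadjoint (op_sqrt (C k) \<circ> T' \<circ> inv (op_sqrt (C k))) \<circ>
                      inv (op_sqrt (C k)) \<circ> (cadjoint T' ^^ k)) h))\<^sup>2)
     = (norm (P (cadjoint T' (P h))))\<^sup>2"
proof -
  have "(norm ((cadjoint (op_sqrt (C k) \<circ> T' \<circ> inv (op_sqrt (C k))) \<circ>
                inv (op_sqrt (C k)) \<circ> (cadjoint T' ^^ k)) h))\<^sup>2
      = Re (cinner (((T' ^^ (k+1)) \<circ> inv (C k) \<circ> (cadjoint T' ^^ (k+1))) h) h)" for k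
    using norm_cadjoint_sqrt_conj[OF T'_power bounded_clinear_T', of k h]
    by (simp add: cadjoint_power funpow_swap1)
  moreover have "(\<lambda>k. Re (cinner (((T' ^^ (k+1)) \<circ> inv (C k) \<circ> (cadjoint T' ^^ (k+1))) h) h))
      \<longlonglongrightarrow> (norm (P (cadjoint T' (P h))))\<^sup>2"
    using tendsto_Re[OF tendsto_cinner_left[OF tendsto_A[of h], of h]] by (simp only: cinner_A Re_complex_of_real)
  ultimately show ?thesis by (simp only: limI)
qed

lemma lim_norm_sqrt_conj:
  "lim (\<lambda>k. (norm ((op_sqrt (C k) \<circ> T' \<circ> inv (op_sqrt (C k)) \<circ>
                      inv (op_sqrt (C k)) \<circ> (cadjoint T' ^^ k)) h))\<^sup>2)
     = (norm (T' (P h)))\<^sup>2"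
proof -
  have "(norm ((op_sqrt (C k) \<circ> T' \<circ> inv (op_sqrt (C k)) \<circ>
                inv (op_sqrt (C k)) \<circ> (cadjoint T' ^^ k)) h))\<^sup>2
      = Re (cinner (((T' ^^ k) \<circ> inv (C k) \<circ> C (k+1) \<circ> inv (C k) \<circ> (cadjoint T' ^^ k)) h) h)" for k
    using norm_sqrt_conj[OF T'_power bounded_clinear_T', of k h]
    by (simp add: cadjoint_power funpow_Suc_right[symmetric] del: funpow.simps)
  moreover have "(\<lambda>k. Re (cinner (((T' ^^ k) \<circ> inv (C k) \<circ> C (k+1) \<circ> inv (C k) \<circ> (cadjoint T' ^^ k)) h) h))
      \<longlonglongrightarrow> (norm (T' (P h)))\<^sup>2"
    using tendsto_Re[OF tendsto_cinner_left[OF tendsto_B[of h], of h]] by (simp only: cinner_B Re_complex_of_real)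
  ultimately show ?thesis by (simp only: limI)
qed

end

theorem proposition7p7:
  fixes T :: "'a::chilbert_space \<Rightarrow> 'a"
  assumes "bounded_clinear T" and "left_invertible T"
  defines "T' \<equiv> cauchy_dual T"
    and "C \<equiv> (\<lambda>k::nat. (cadjoint (cauchy_dual T) ^^ k) \<circ> (cauchy_dual T ^^ k))"
    and "Hu \<equiv> (\<Inter>n. range (cauchy_dual T ^^ n))"
    and "P \<equiv> orth_proj (\<Inter>n. range (cauchy_dual T ^^ n))"
  shows "(\<forall>h. (\<lambda>k. ((T' ^^ (k+1)) \<circ> inv (C k) \<circ> (cadjoint T' ^^ (k+1))) h)
                  \<longlonglongrightarrow> (P \<circ> T' \<circ> P \<circ> cadjoint T' \<circ> P) h)
      \<and> bounded_clinear (P \<circ> T' \<circ> P \<circ> cadjoint T' \<circ> P)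
      \<and> positive_op (P \<circ> T' \<circ> P \<circ> cadjoint T' \<circ> P)
      \<and> (\<forall>h. (\<lambda>k. ((T' ^^ k) \<circ> inv (C k) \<circ> C (k+1) \<circ> inv (C k) \<circ> (cadjoint T' ^^ k)) h)
                  \<longlonglongrightarrow> (P \<circ> inv (cadjoint T \<circ> T) \<circ> P) h)
      \<and> bounded_clinear (P \<circ> inv (cadjoint T \<circ> T) \<circ> P)
      \<and> positive_op (P \<circ> inv (cadjoint T \<circ> T) \<circ> P)
      \<and> (hyponormal_on Hu T' \<longleftrightarrow>
           op_le (P \<circ> T' \<circ> P \<circ> cadjoint T' \<circ> P) (P \<circ> inv (cadjoint T \<circ> T) \<circ> P))
      \<and> (hyponormal_on Hu T' \<longleftrightarrow>
           (\<forall>h. lim (\<lambda>k. (norm ((cadjoint (op_sqrt (C k) \<circ> T' \<circ> inv (op_sqrt (C k))) \<circ>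
                                  inv (op_sqrt (C k)) \<circ> (cadjoint T' ^^ k)) h))\<^sup>2)
              \<le> lim (\<lambda>k. (norm ((op_sqrt (C k) \<circ> T' \<circ> inv (op_sqrt (C k)) \<circ>
                                  inv (op_sqrt (C k)) \<circ> (cadjoint T' ^^ k)) h))\<^sup>2)))
      \<and> (hyponormal_on Hu T' \<longleftrightarrow>
           positive_op (P \<circ> (\<lambda>h. inv (cadjoint T \<circ> T) h - (T' \<circ> P \<circ> cadjoint T') h) \<circ> P))"
proof -
  interpret left_invertible_operator T by unfold_locales (fact assms)+
  show ?thesis
    unfolding assms(3-6) op_le_def
      positive_op_iff_real_form[OF cinner_A] positive_op_iff_real_form[OF cinner_B]
      positive_op_iff_real_form[OF cinner_B_minus_A] positive_op_iff_real_form[OF cinner_defect]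
      hyponormal_iff lim_norm_cadjoint_sqrt_conj lim_norm_sqrt_conj
    using tendsto_A tendsto_B bounded_clinear_A bounded_clinear_B by auto
qed

end
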